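(* For every $m\geq 0$, the double occurrence words $w$ of length $2m$ (over $m$ symbols, considered up to renaming of symbols) such that the set of sinks of $\vec{\Lambda}(w)$ is a dominating set of $\vec{\Lambda}(w)$ are in bijection with the rooted loopless maps with $m$ edges (up to isomorphism of rooted maps).
   Context: A double occurrence word is a word in which each occurring symbol occurs exactly twice. For such $w$, $\vec\Lambda(w)$ is the directed graph on the symbols of $w$ with an arc $e\to f$ whenever $e\,f\,e\,f$ is a subsequence of $w$. A sink is a vertex with no out-neighbor; a set $D$ of vertices is dominating if every vertex not in $D$ is adjacent (in either direction) to a vertex of $D$. A map is a triple $(B,\sigma,\alpha)$ with $B$ finite, $\sigma,\alpha\in\mathrm{Sym}(B)$, $\alpha$ a fixed-point-free involution, $\langle\sigma,\alpha\rangle$ transitive on $B$; its edges are the cycles of $\alpha$ and vertices the cycles of $\sigma$; it is loopless if no edge is contained in a single cycle of $\sigma$. A rooted map has a distinguished flag $b_\bullet\in B$; two rooted maps are isomorphic if a bijection of flag sets conjugates the respective $\sigma$'s and $\alpha$'s and maps root to root. *)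

theory Defs
  imports "HOL-Library.Sublist" "HOL-Combinatorics.Permutations"
begin

definition dow :: "nat list \<Rightarrow> bool" where
  "dow w \<longleftrightarrow> (\<forall>x \<in> set w. count_list w x = 2)"

definition lam_arc :: "nat list \<Rightarrow> nat \<Rightarrow> nat \<Rightarrow> bool" where
  "lam_arc w e f \<longleftrightarrow> e \<in> set w \<and> f \<in> set w \<and> subseq [e, f, e, f] w"

definition sinks :: "nat list \<Rightarrow> nat set" where
  "sinks w = {v \<in> set w. \<not> (\<exists>u. lam_arc w v u)}"

definition dominating :: "nat list \<Rightarrow> nat set \<Rightarrow> bool" where
  "dominating w D \<longleftrightarrow> D \<subseteq> set w \<and>
     (\<forall>v \<in> set w - D. \<exists>u \<in> D. lam_arc w u v \<or> lam_arc w v u)"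

definition renaming_rel :: "(nat list \<times> nat list) set" where
  "renaming_rel = {(w, v). \<exists>g. inj_on g (set w) \<and> map g w = v}"

definition dow_classes :: "nat \<Rightarrow> nat list set set" where
  "dow_classes m =
     {w. dow w \<and> length w = 2 * m \<and> dominating w (sinks w)} // renaming_rel"

text \<open>A (rooted) map with flags in nat: (B, sigma, alpha, root).  Sym(B) is rendered by
  \<open>permutes\<close> (bijection of the type that is the identity outside B).\<close>

type_synonym rmap = "nat set \<times> (nat \<Rightarrow> nat) \<times> (nat \<Rightarrow> nat) \<times> nat"

definition cyc :: "(nat \<Rightarrow> nat) \<Rightarrow> nat \<Rightarrow> nat set" where
  "cyc p b = {(p ^^ n) b | n. True}"

definition is_map :: "nat set \<Rightarrow> (nat \<Rightarrow> nat) \<Rightarrow> (nat \<Rightarrow> nat) \<Rightarrow> bool" where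
  "is_map B \<sigma> \<alpha> \<longleftrightarrow> finite B \<and> \<sigma> permutes B \<and> \<alpha> permutes B \<and>
     (\<forall>b \<in> B. \<alpha> b \<noteq> b \<and> \<alpha> (\<alpha> b) = b) \<and>
     (\<forall>b \<in> B. \<forall>c \<in> B.
        (\<lambda>x y. y = \<sigma> x \<or> x = \<sigma> y \<or> y = \<alpha> x \<or> x = \<alpha> y)\<^sup>*\<^sup>* b c)"

definition map_edges :: "nat set \<Rightarrow> (nat \<Rightarrow> nat) \<Rightarrow> nat set set" where
  "map_edges B \<alpha> = cyc \<alpha> ` B"

definition map_vertices :: "nat set \<Rightarrow> (nat \<Rightarrow> nat) \<Rightarrow> nat set set" where
  "map_vertices B \<sigma> = cyc \<sigma> ` B"

definition loopless :: "nat set \<Rightarrow> (nat \<Rightarrow> nat) \<Rightarrow> (nat \<Rightarrow> nat) \<Rightarrow> bool" where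
  "loopless B \<sigma> \<alpha> \<longleftrightarrow> (\<forall>e \<in> map_edges B \<alpha>. \<forall>v \<in> map_vertices B \<sigma>. \<not> e \<subseteq> v)"

definition rooted_loopless_maps :: "nat \<Rightarrow> rmap set" where
  "rooted_loopless_maps m = {(B, \<sigma>, \<alpha>, r). is_map B \<sigma> \<alpha> \<and> r \<in> B \<and>
      loopless B \<sigma> \<alpha> \<and> card (map_edges B \<alpha>) = m}"

definition rmap_iso :: "(rmap \<times> rmap) set" where
  "rmap_iso = {((B, \<sigma>, \<alpha>, r), (B', \<sigma>', \<alpha>', r')). \<exists>\<phi>. bij_betw \<phi> B B' \<and>
      (\<forall>b \<in> B. \<phi> (\<sigma> b) = \<sigma>' (\<phi> b) \<and> \<phi> (\<alpha> b) = \<alpha>' (\<phi> b)) \<and> \<phi> r = r'}"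

definition rooted_loopless_map_classes :: "nat \<Rightarrow> rmap set set" where
  "rooted_loopless_map_classes m = rooted_loopless_maps m // rmap_iso"

end

theory Submission
  imports Defs "HOL-Combinatorics.Orbits"
begin

definition flag_adj :: "('a \<Rightarrow> 'a) \<Rightarrow> ('a \<Rightarrow> 'a) \<Rightarrow> 'a \<Rightarrow> 'a \<Rightarrow> bool" where
  "flag_adj s a x y \<longleftrightarrow> y = s x \<or> x = s y \<or> y = a x \<or> x = a y"

lemma flag_adj_sym: "flag_adj s a x y \<Longrightarrow> flag_adj s a y x"
  unfolding flag_adj_def by auto

lemma flag_adj_rtranclp_sym: "(flag_adj s a)\<^sup>*\<^sup>* x y \<Longrightarrow> (flag_adj s a)\<^sup>*\<^sup>* y x"
  by (rule sympD[OF symp_rtranclp]) (auto intro: sympI flag_adj_sym)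

lemma is_map_iff:
  "is_map B s a \<longleftrightarrow> finite B \<and> s permutes B \<and> a permutes B \<and>
     (\<forall>b \<in> B. a b \<noteq> b \<and> a (a b) = b) \<and> (\<forall>b \<in> B. \<forall>c \<in> B. (flag_adj s a)\<^sup>*\<^sup>* b c)"
proof -
  have "flag_adj s a = (\<lambda>x y. y = s x \<or> x = s y \<or> y = a x \<or> x = a y)"
    by (intro ext) (simp add: flag_adj_def)
  then show ?thesis unfolding is_map_def by simp
qed

lemma cyc_self: "x \<in> cyc s x"
  unfolding cyc_def by (auto intro: exI[of _ 0])

lemma cyc_step: "y \<in> cyc s x \<Longrightarrow> s y \<in> cyc s x"
  unfolding cyc_def by (auto intro: exI[of _ "Suc n" for n])

lemma cyc_trans: "y \<in> cyc s x \<Longrightarrow> z \<in> cyc s y \<Longrightarrow> z \<in> cyc s x"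
  unfolding cyc_def by (auto simp flip: funpow_add comp_apply[of "s ^^ n" "s ^^ m" for n m])

lemma cyc_eq_orbit: "permutation s \<Longrightarrow> cyc s x = orbit s x"
  using orbit_altdef_permutation[of s x] unfolding cyc_def by simp

lemma cyc_sym: "permutation s \<Longrightarrow> y \<in> cyc s x \<Longrightarrow> x \<in> cyc s y"
  using cyc_eq_orbit orbit_swap permutation_self_in_orbit by metis

lemma cyc_eq: "permutation s \<Longrightarrow> y \<in> cyc s x \<Longrightarrow> cyc s y = cyc s x"
  using cyc_trans cyc_sym by blast

lemma cyc_subset:
  assumes "\<And>y. y \<in> cyc s x \<Longrightarrow> t y \<in> cyc s x"
  shows "cyc t x \<subseteq> cyc s x"
proof -
  have "(t ^^ n) x \<in> cyc s x" for n by (induction n) (auto simp: cyc_self assms)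
  then show ?thesis unfolding cyc_def by auto
qed

lemma cyc_involution:
  assumes "a (a b) = b"
  shows "cyc a b = {b, a b}"
proof -
  have "(a ^^ n) b = (if even n then b else a b)" for n by (induction n) (auto simp: assms)
  then show ?thesis unfolding cyc_def by (auto intro: exI[of _ 0] exI[of _ 1])
qed

lemma image_cyc_conj:
  assumes "\<And>b. b \<in> K \<Longrightarrow> t b \<in> K" "\<And>b. b \<in> K \<Longrightarrow> f (t b) = u (f b)" "x \<in> K"
  shows "f ` cyc t x = cyc u (f x)" "cyc t x \<subseteq> K"
proof -
  have *: "f ((t ^^ n) x) = (u ^^ n) (f x) \<and> (t ^^ n) x \<in> K" for n
    by (induction n) (auto simp: assms)
  show "f ` cyc t x = cyc u (f x)" "cyc t x \<subseteq> K" unfolding cyc_def using * by (auto simp: image_def)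
qed

lemma loopless_iff:
  assumes "permutation s" "\<And>b. b \<in> B \<Longrightarrow> a (a b) = b"
  shows "loopless B s a \<longleftrightarrow> (\<forall>b\<in>B. a b \<notin> cyc s b)"
proof -
  have key: "cyc a b \<subseteq> cyc s c \<longleftrightarrow> b \<in> cyc s c \<and> a b \<in> cyc s b" if "b \<in> B" for b c
  proof -
    have "cyc a b \<subseteq> cyc s c \<longleftrightarrow> b \<in> cyc s c \<and> a b \<in> cyc s c"
      using cyc_involution[of a b, OF assms(2)[OF that]] by simp
    also have "\<dots> \<longleftrightarrow> b \<in> cyc s c \<and> a b \<in> cyc s b"
      using cyc_eq[OF assms(1), of b c] by auto
    finally show ?thesis .
  qed
  show ?thesis
  proof
    assume loopless: "loopless B s a"
    show "\<forall>b\<in>B. a b \<notin> cyc s b"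
    proof (intro ballI notI)
      fix b assume b: "b \<in> B" "a b \<in> cyc s b"
      then have "cyc a b \<subseteq> cyc s b" using key cyc_self by simp
      moreover have "cyc a b \<in> map_edges B a" "cyc s b \<in> map_vertices B s"
        using b(1) unfolding map_edges_def map_vertices_def by auto
      ultimately show False using loopless unfolding loopless_def by blast
    qed
  next
    assume no_loop: "\<forall>b\<in>B. a b \<notin> cyc s b"
    show "loopless B s a" unfolding loopless_def map_edges_def map_vertices_def
    proof (intro ballI)
      fix e v assume "e \<in> cyc a ` B" "v \<in> cyc s ` B"
      then obtain b c where "b \<in> B" "e = cyc a b" "v = cyc s c" by auto
      then show "\<not> e \<subseteq> v" using key no_loop by auto
    qed
  qed
qed

lemma card_map_edges:
  assumes "finite B" and closed: "\<And>b. b \<in> B \<Longrightarrow> a b \<in> B"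
    and invol: "\<forall>b\<in>B. a b \<noteq> b \<and> a (a b) = b"
  shows "card (map_edges B a) * 2 = card B"
proof -
  have edge: "cyc a b = {b, a b}" if "b \<in> B" for b using cyc_involution invol that by auto
  have ainj: "x = y" if "x \<in> B" "y \<in> B" "a x = a y" for x y using invol that by metis
  have union: "\<Union>(map_edges B a) = B" unfolding map_edges_def using edge closed by auto
  have "2 * card (map_edges B a) = card (\<Union>(map_edges B a))"
  proof (rule card_partition)
    show "finite (map_edges B a)" unfolding map_edges_def using assms(1) by auto
    show "finite (\<Union>(map_edges B a))" using union assms(1) by simp
    show "\<And>c. c \<in> map_edges B a \<Longrightarrow> card c = 2"
      unfolding map_edges_def using edge invol by auto
    show "\<And>c1 c2. c1 \<in> map_edges B a \<Longrightarrow> c2 \<in> map_edges B a \<Longrightarrow> c1 \<noteq> c2 \<Longrightarrow> c1 \<inter> c2 = {}"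
      unfolding map_edges_def using edge invol ainj by auto
  qed
  then show ?thesis using union by simp
qed

lemma permutes_interval_if_inj:
  fixes f :: "nat \<Rightarrow> nat"
  assumes "\<And>i. i < n \<Longrightarrow> f i < n" "\<And>i j. i < n \<Longrightarrow> j < n \<Longrightarrow> f i = f j \<Longrightarrow> i = j"
    and "\<And>i. n \<le> i \<Longrightarrow> f i = i"
  shows "f permutes {0..<n}"
proof (rule bij_imp_permutes)
  have "inj_on f {0..<n}" "f ` {0..<n} \<subseteq> {0..<n}" using assms(1,2) by (auto simp: inj_on_def)
  then show "bij_betw f {0..<n} {0..<n}" using endo_inj_surj[of "{0..<n}"] unfolding bij_betw_def by auto
qed (use assms(3) in auto)

lemma permutes_perm_restrict:
  assumes "finite K" "\<And>x. x \<in> K \<Longrightarrow> f x \<in> K" "inj_on f K"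
  shows "perm_restrict f K permutes K"
proof (rule bij_imp_permutes)
  have "inj_on (perm_restrict f K) K" "perm_restrict f K ` K \<subseteq> K"
    using assms(2,3) unfolding inj_on_def perm_restrict_def by auto
  then show "bij_betw (perm_restrict f K) K K" using endo_inj_surj[OF assms(1)] unfolding bij_betw_def by simp
qed (simp add: perm_restrict_def)

lemma bij_betw_inv_into_conj:
  assumes "bij_betw f A A'" "\<And>b. b \<in> A \<Longrightarrow> s b \<in> A" "\<And>b. b \<in> A \<Longrightarrow> f (s b) = t (f b)" "b \<in> A'"
  shows "inv_into A f (t b) = s (inv_into A f b)"
proof -
  obtain c where c: "c \<in> A" "b = f c" using assms(1,4) unfolding bij_betw_def by auto
  then show ?thesis
    using assms(2,3) bij_betw_inv_into_left[OF assms(1)] by metis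
qed

locale cyclic_successor =
  fixes C :: "nat set" and f :: "nat \<Rightarrow> nat"
  assumes finite: "finite C" and closed: "\<And>y. y \<in> C \<Longrightarrow> f y \<in> C"
    and up: "\<And>y z. y \<in> C \<Longrightarrow> z \<in> C \<Longrightarrow> y < z \<Longrightarrow> y < f y \<and> f y \<le> z"
    and wrap: "\<And>y z. y \<in> C \<Longrightarrow> z \<in> C \<Longrightarrow> \<forall>z\<in>C. z \<le> y \<Longrightarrow> f y \<le> z"
begin

lemma reaches_Max:
  assumes "y \<in> C"
  shows "\<exists>k. (f ^^ k) y = Max C"
  using assms
proof (induction "Max C - y" arbitrary: y rule: less_induct)
  case less
  have M: "Max C \<in> C" "y \<le> Max C" using Max_in Max_ge finite less.prems by auto
  show ?case
  proof (cases "y = Max C")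
    case False
    then have "y < f y" "f y \<in> C" "f y \<le> Max C"
      using up[OF less.prems M(1)] M(2) closed[OF less.prems] Max_ge[OF finite] by auto
    then obtain k where "(f ^^ k) (f y) = Max C" using less.hyps[of "f y"] by fastforce
    then have "(f ^^ Suc k) y = Max C" by (simp add: funpow_Suc_right del: funpow.simps)
    then show ?thesis by blast
  qed (auto intro: exI[of _ 0])
qed

lemma successor_of_Max_reaches:
  assumes "z \<in> C"
  shows "\<exists>k. (f ^^ k) (f (Max C)) = z"
  using assms
proof (induction z rule: less_induct)
  case (less z)
  have M: "Max C \<in> C" "\<And>c. c \<in> C \<Longrightarrow> c \<le> Max C" using Max_in Max_ge finite less.prems by auto
  show ?case
  proof (cases "z = f (Max C)")
    case False
    then have "f (Max C) < z" using wrap[OF M(1) less.prems] M(2) by fastforce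
    define y where "y = Max {c \<in> C. c < z}"
    have fin: "finite {c \<in> C. c < z}" using finite by simp
    have "y \<in> {c \<in> C. c < z}"
      using Max_in[OF fin] closed[OF M(1)] \<open>f (Max C) < z\<close> unfolding y_def by blast
    then have y: "y \<in> C" "y < z" "\<And>c. c \<in> C \<Longrightarrow> c < z \<Longrightarrow> c \<le> y"
      using Max_ge[OF fin] unfolding y_def by auto
    have "f y = z"
      using up[OF y(1) less.prems y(2)] y(3)[OF closed[OF y(1)]] by fastforce
    moreover obtain k where "(f ^^ k) (f (Max C)) = y" using less.IH[OF y(2,1)] by blast
    ultimately have "(f ^^ Suc k) (f (Max C)) = z" by simp
    then show ?thesis by blast
  qed (auto intro: exI[of _ 0])
qed

lemma reaches:
  assumes "x \<in> C" "z \<in> C"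
  shows "\<exists>k. (f ^^ k) x = z"
proof -
  obtain k1 k2 where "(f ^^ k1) x = Max C" "(f ^^ k2) (f (Max C)) = z"
    using reaches_Max[OF assms(1)] successor_of_Max_reaches[OF assms(2)] by blast
  then have "(f ^^ (k2 + Suc k1)) x = z" by (simp only: funpow_add o_apply funpow.simps)
  then show ?thesis by blast
qed

end

section \<open>Positions in double occurrence words\<close>

lemma dow_ex1_partner:
  assumes "dow w" "i < length w"
  shows "\<exists>!j. j < length w \<and> j \<noteq> i \<and> w!j = w!i"
proof -
  have "count_list w (w!i) = 2" using assms unfolding dow_def by auto
  then have "card {j. j < length w \<and> w!i = w!j} = 2"
    by (simp only: count_list_eq_length_filter length_filter_conv_card)
  moreover have "{j. j < length w \<and> w!i = w!j} = {j. j < length w \<and> w!j = w!i}" by auto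
  ultimately obtain x y where xy: "{j. j < length w \<and> w!j = w!i} = {x, y}" "x \<noteq> y"
    unfolding card_2_iff by auto
  have "i \<in> {x, y}" using xy(1) assms(2) by blast
  then obtain z where z: "{x, y} = {i, z}" "z \<noteq> i" using xy(2) by blast
  show ?thesis using xy(1) z by blast
qed

definition partner :: "nat list \<Rightarrow> nat \<Rightarrow> nat" where
  "partner w i = (THE j. j < length w \<and> j \<noteq> i \<and> w!j = w!i)"

lemma partner_spec:
  assumes "dow w" "i < length w"
  shows "partner w i < length w" "partner w i \<noteq> i" "w ! partner w i = w!i"
  using theI'[OF dow_ex1_partner[OF assms]] unfolding partner_def by auto

lemma partner_eqI:
  assumes "dow w" "i < length w" "j < length w" "j \<noteq> i" "w!j = w!i"
  shows "partner w i = j"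
  using the1_equality[OF dow_ex1_partner[OF assms(1,2)]] assms unfolding partner_def by auto

lemma partner_partner:
  assumes "dow w" "i < length w"
  shows "partner w (partner w i) = i"
  using partner_spec[OF assms] partner_eqI[OF assms(1) partner_spec(1)[OF assms] assms(2)] by metis

lemma nth_eq_nth_iff_partner:
  assumes "dow w" "i < length w" "j < length w"
  shows "w!j = w!i \<longleftrightarrow> j = i \<or> j = partner w i"
  using partner_eqI[OF assms] partner_spec[OF assms(1,2)] by auto

lemma partner_inj:
  assumes "dow w" "i < length w" "j < length w" "partner w i = partner w j"
  shows "i = j"
  using partner_partner[OF assms(1,2)] partner_partner[OF assms(1,3)] assms(4) by metis

definition first_occ :: "nat list \<Rightarrow> nat \<Rightarrow> nat" where
  "first_occ w i = min i (partner w i)"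

definition interlaced :: "nat list \<Rightarrow> nat \<Rightarrow> nat \<Rightarrow> bool" where
  "interlaced w i j \<longleftrightarrow> i < j \<and> j < partner w i \<and> partner w i < partner w j"

lemma first_occ_spec:
  assumes "dow w" "i < length w"
  shows "first_occ w i < length w" "w ! first_occ w i = w!i" "first_occ w i < partner w (first_occ w i)"
  using partner_spec[OF assms] partner_partner[OF assms] unfolding first_occ_def by (auto simp: min_def)

lemma first_occ_eqI:
  assumes "dow w" "i < length w" "j < length w" "w!j = w!i" "j < partner w j"
  shows "first_occ w i = j"
  using assms nth_eq_nth_iff_partner[OF assms(1-3)] partner_partner[OF assms(1,2)] partner_spec[OF assms(1,2)]
  unfolding first_occ_def by (auto simp: min_def)

lemma first_occ_self: "i < partner w i \<Longrightarrow> first_occ w i = i"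
  unfolding first_occ_def by simp

lemma interlaced_less_length:
  assumes "dow w" "i < length w" "interlaced w i j"
  shows "j < length w"
  using assms partner_spec[OF assms(1,2)] unfolding interlaced_def by auto

lemma interlaced_first_occ: "interlaced w i j \<Longrightarrow> first_occ w j = j"
  unfolding interlaced_def first_occ_def by auto

lemma subseq_Cons_drop:
  "subseq (x#xs) (drop k ys) \<longleftrightarrow>
     (\<exists>i. k \<le> i \<and> i < length ys \<and> ys!i = x \<and> subseq xs (drop (Suc i) ys))"
proof
  assume "subseq (x#xs) (drop k ys)"
  then obtain us vs where split: "drop k ys = us @ x # vs" "subseq xs vs"
    by (auto dest: list_emb_ConsD)
  define i where "i = k + length us"
  have "k \<le> i" "i < length ys" "ys!i = x" "drop (Suc i) ys = vs"
    using arg_cong[OF split(1), of length] arg_cong[OF split(1), of "\<lambda>zs. zs ! length us"]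
      arg_cong[OF split(1), of "drop (Suc (length us))"]
    unfolding i_def by (auto simp: nth_append ac_simps)
  then show "\<exists>i. k \<le> i \<and> i < length ys \<and> ys!i = x \<and> subseq xs (drop (Suc i) ys)"
    using split(2) by blast
next
  assume "\<exists>i. k \<le> i \<and> i < length ys \<and> ys!i = x \<and> subseq xs (drop (Suc i) ys)"
  then obtain i where i: "k \<le> i" "i < length ys" "ys!i = x" "subseq xs (drop (Suc i) ys)" by blast
  have "drop k ys = take (i - k) (drop k ys) @ x # drop (Suc i) ys"
    using i id_take_nth_drop[of "i - k" "drop k ys"] by auto
  then show "subseq (x#xs) (drop k ys)"
    using i(4) by (metis subseq_Cons2 subseq_drop_many)
qed

lemma subseq_length4_iff:
  "subseq [a, b, c, d] ys \<longleftrightarrow> (\<exists>i j k l. i < j \<and> j < k \<and> k < l \<and> l < length ys \<and>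
      ys!i = a \<and> ys!j = b \<and> ys!k = c \<and> ys!l = d)"
proof -
  have "subseq [a, b, c, d] ys \<longleftrightarrow> subseq [a, b, c, d] (drop 0 ys)" by simp
  also have "\<dots> \<longleftrightarrow> (\<exists>i j k l. i < j \<and> j < k \<and> k < l \<and> l < length ys \<and>
      ys!i = a \<and> ys!j = b \<and> ys!k = c \<and> ys!l = d)"
    unfolding subseq_Cons_drop Suc_le_eq
  proof (intro iffI; elim exE conjE)
    fix i j k l
    assume "i < length ys" "ys!i = a" "i < j" "j < length ys" "ys!j = b"
      "j < k" "k < length ys" "ys!k = c" "k < l" "l < length ys" "ys!l = d"
    then show "\<exists>i j k l. i < j \<and> j < k \<and> k < l \<and> l < length ys \<and>
      ys!i = a \<and> ys!j = b \<and> ys!k = c \<and> ys!l = d" by blast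
  next
    fix i j k l
    assume "i < j" "j < k" "k < l" "l < length ys" "ys!i = a" "ys!j = b" "ys!k = c" "ys!l = d"
    then show "\<exists>i. 0 \<le> i \<and> i < length ys \<and> ys!i = a \<and> (\<exists>j. i < j \<and> j < length ys \<and> ys!j = b \<and>
      (\<exists>k. j < k \<and> k < length ys \<and> ys!k = c \<and> (\<exists>l. k < l \<and> l < length ys \<and> ys!l = d \<and> subseq [] (drop (Suc l) ys))))"
      by (intro exI[of _ i] conjI exI[of _ j] exI[of _ k] exI[of _ l]) auto
  qed
  finally show ?thesis .
qed

lemma lam_arc_iff_interlaced:
  assumes "dow w" "i < length w" "j < length w"
  shows "lam_arc w (w!i) (w!j) \<longleftrightarrow> interlaced w (first_occ w i) (first_occ w j)"
proof
  assume "lam_arc w (w!i) (w!j)"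
  then obtain a b c d where abcd: "a < b" "b < c" "c < d" "d < length w"
    "w!a = w!i" "w!b = w!j" "w!c = w!i" "w!d = w!j"
    unfolding lam_arc_def subseq_length4_iff by blast
  have "c = partner w a" "d = partner w b"
    using partner_eqI[OF assms(1), of a c] partner_eqI[OF assms(1), of b d] abcd by auto
  moreover have "first_occ w i = a" "first_occ w j = b"
    using first_occ_eqI[OF assms(1,2), of a] first_occ_eqI[OF assms(1,3), of b] abcd calculation by auto
  ultimately show "interlaced w (first_occ w i) (first_occ w j)"
    using abcd unfolding interlaced_def by auto
next
  assume il: "interlaced w (first_occ w i) (first_occ w j)"
  have "subseq [w!i, w!j, w!i, w!j] w"
    unfolding subseq_length4_iff
    apply (rule exI[of _ "first_occ w i"], rule exI[of _ "first_occ w j"],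
        rule exI[of _ "partner w (first_occ w i)"], rule exI[of _ "partner w (first_occ w j)"])
    using il first_occ_spec[OF assms(1,2)] first_occ_spec[OF assms(1,3)]
      partner_spec[OF assms(1) first_occ_spec(1)[OF assms(1,2)]]
      partner_spec[OF assms(1) first_occ_spec(1)[OF assms(1,3)]]
    unfolding interlaced_def by auto
  then show "lam_arc w (w!i) (w!j)" unfolding lam_arc_def using assms by auto
qed

abbreviation sink_at :: "nat list \<Rightarrow> nat \<Rightarrow> bool" where
  "sink_at w i \<equiv> w!i \<in> sinks w"

lemma sink_at_iff:
  assumes "dow w" "i < length w"
  shows "sink_at w i \<longleftrightarrow> \<not> (\<exists>j<length w. interlaced w (first_occ w i) j)"
proof -
  have "sink_at w i \<longleftrightarrow> \<not> (\<exists>j<length w. lam_arc w (w!i) (w!j))"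
    unfolding sinks_def using assms by (auto simp: lam_arc_def in_set_conv_nth)
  also have "\<dots> \<longleftrightarrow> \<not> (\<exists>j<length w. interlaced w (first_occ w i) (first_occ w j))"
    using lam_arc_iff_interlaced[OF assms] by auto
  also have "\<dots> \<longleftrightarrow> \<not> (\<exists>j<length w. interlaced w (first_occ w i) j)"
    using interlaced_first_occ interlaced_less_length[OF assms(1) first_occ_spec(1)[OF assms]]
      first_occ_spec(1)[OF assms(1)] by metis
  finally show ?thesis .
qed

lemma sink_at_partner:
  assumes "dow w" "i < length w"
  shows "sink_at w (partner w i) \<longleftrightarrow> sink_at w i"
  using partner_spec[OF assms] by simp

definition sink_dominated :: "nat list \<Rightarrow> bool" where
  "sink_dominated w \<longleftrightarrow> dow w \<and> dominating w (sinks w)"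

lemma sink_dominated_iff:
  assumes "dow w"
  shows "sink_dominated w \<longleftrightarrow> (\<forall>i<length w. sink_at w i \<or> (\<exists>j<length w. sink_at w j \<and>
     (interlaced w (first_occ w j) (first_occ w i) \<or> interlaced w (first_occ w i) (first_occ w j))))"
proof -
  have ex_sink: "(\<exists>u\<in>sinks w. P u) \<longleftrightarrow> (\<exists>j<length w. sink_at w j \<and> P (w!j))" for P
    unfolding sinks_def by (auto simp: in_set_conv_nth)
  have "sinks w \<subseteq> set w" unfolding sinks_def by auto
  then have "dominating w (sinks w) \<longleftrightarrow>
      (\<forall>v\<in>set w. v \<in> sinks w \<or> (\<exists>u\<in>sinks w. lam_arc w u v \<or> lam_arc w v u))"
    unfolding dominating_def by blast
  also have "\<dots> \<longleftrightarrow> (\<forall>i<length w. sink_at w i \<or>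
     (\<exists>j<length w. sink_at w j \<and> (lam_arc w (w!j) (w!i) \<or> lam_arc w (w!i) (w!j))))"
    unfolding ex_sink all_set_conv_all_nth ..
  finally have "dominating w (sinks w) \<longleftrightarrow> \<dots>" .
  then show ?thesis unfolding sink_dominated_def using assms lam_arc_iff_interlaced[OF assms] by auto
qed

section \<open>The map of a word\<close>

definition cnext :: "nat \<Rightarrow> nat \<Rightarrow> nat" where
  "cnext n i = (if Suc i = n then 0 else Suc i)"

definition sink_jump :: "nat list \<Rightarrow> nat \<Rightarrow> nat" where
  "sink_jump w i = (if sink_at w i then partner w i else i)"

definition word_sigma :: "nat list \<Rightarrow> nat \<Rightarrow> nat" where
  "word_sigma w i = (if i < length w then cnext (length w) (sink_jump w i) else i)"

definition word_alpha :: "nat list \<Rightarrow> nat \<Rightarrow> nat" where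
  "word_alpha w i = (if i < length w then partner w i else i)"

definition word_map :: "nat list \<Rightarrow> rmap" where
  "word_map w = ({0..<length w}, word_sigma w, word_alpha w, 0)"

lemma cnext_cases: "cnext n i = 0 \<or> cnext n i = Suc i"
  unfolding cnext_def by auto

lemma cnext_inj: "i < n \<Longrightarrow> j < n \<Longrightarrow> cnext n i = cnext n j \<Longrightarrow> i = j"
  unfolding cnext_def by (auto split: if_splits)

lemma sink_jump_spec:
  assumes "dow w" "i < length w"
  shows "sink_jump w i < length w" "sink_jump w (sink_jump w i) = i"
    "sink_jump w i = i \<or> sink_jump w i = partner w i"
  using assms partner_spec[OF assms] partner_partner[OF assms] sink_at_partner[OF assms]
  unfolding sink_jump_def by auto

lemma word_sigma_less:
  assumes "dow w" "i < length w"
  shows "word_sigma w i < length w"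
  using assms sink_jump_spec(1)[OF assms] unfolding word_sigma_def cnext_def by auto

lemma word_alpha_less:
  assumes "dow w" "i < length w"
  shows "word_alpha w i < length w"
  using assms partner_spec(1)[OF assms] unfolding word_alpha_def by auto

lemma word_sigma_sink_jump:
  "dow w \<Longrightarrow> i < length w \<Longrightarrow> word_sigma w (sink_jump w i) = cnext (length w) i"
  using sink_jump_spec unfolding word_sigma_def by auto

lemma word_sigma_inj:
  assumes "dow w" "i < length w" "j < length w" "word_sigma w i = word_sigma w j"
  shows "i = j"
  using assms sink_jump_spec[OF assms(1,2)] sink_jump_spec[OF assms(1,3)] cnext_inj
  unfolding word_sigma_def by metis

lemma word_sigma_permutes:
  assumes "dow w"
  shows "word_sigma w permutes {0..<length w}"
proof (rule permutes_interval_if_inj)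
  show "word_sigma w i = i" if "length w \<le> i" for i using that by (simp add: word_sigma_def)
qed (use word_sigma_less[OF assms] word_sigma_inj[OF assms] in blast)+

lemma word_alpha_inj:
  assumes "dow w" "i < length w" "j < length w" "word_alpha w i = word_alpha w j"
  shows "i = j"
  using assms partner_inj unfolding word_alpha_def by auto

lemma word_alpha_permutes:
  assumes "dow w"
  shows "word_alpha w permutes {0..<length w}"
proof (rule permutes_interval_if_inj)
  show "word_alpha w i = i" if "length w \<le> i" for i using that by (simp add: word_alpha_def)
qed (use word_alpha_less[OF assms] word_alpha_inj[OF assms] in blast)+

lemma word_map_connected:
  assumes "dow w" "b < length w" "c < length w"
  shows "(flag_adj (word_sigma w) (word_alpha w))\<^sup>*\<^sup>* b c"
proof -
  let ?R = "flag_adj (word_sigma w) (word_alpha w)"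
  have from0: "?R\<^sup>*\<^sup>* 0 i" if "i < length w" for i
    using that
  proof (induction i)
    case (Suc i)
    then have i: "i < length w" by simp
    have "?R\<^sup>*\<^sup>* i (sink_jump w i)"
      using sink_jump_spec(3)[OF assms(1) i] i unfolding flag_adj_def word_alpha_def by auto
    moreover have "?R (sink_jump w i) (Suc i)"
      using word_sigma_sink_jump[OF assms(1) i] Suc.prems unfolding cnext_def flag_adj_def by auto
    ultimately show ?case using Suc.IH[OF i] by (meson rtranclp.rtrancl_into_rtrancl rtranclp_trans)
  qed simp
  show ?thesis using flag_adj_rtranclp_sym[OF from0[OF assms(2)]] from0[OF assms(3)] by simp
qed

definition sink_opening :: "nat list \<Rightarrow> nat \<Rightarrow> bool" where
  "sink_opening w p \<longleftrightarrow> p < length w \<and> sink_at w p \<and> p < partner w p"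

definition enclosing_sinks :: "nat list \<Rightarrow> nat \<Rightarrow> nat set" where
  "enclosing_sinks w x = {p. sink_opening w p \<and> p < x \<and> x \<le> partner w p}"

lemma sink_opening_partner:
  assumes "dow w" "sink_opening w p"
  shows "partner w p < length w" "sink_at w (partner w p)" "partner w (partner w p) = p"
  using assms partner_spec partner_partner sink_at_partner unfolding sink_opening_def by auto

lemma sink_opening_if_sink_at:
  assumes "dow w" "i < length w" "sink_at w i"
  shows "sink_opening w (min i (partner w i))"
  using assms partner_spec[OF assms(1,2)] partner_partner[OF assms(1,2)] sink_at_partner[OF assms(1,2)]
  unfolding sink_opening_def by (auto simp: min_def)

text \<open>Sink letters do not interlace, so their intervals form a laminar family.\<close>

lemma sink_intervals_nested:
  assumes "dow w" "sink_opening w p" "sink_opening w p'" "p < p'" "p' < partner w p"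
  shows "partner w p' < partner w p"
proof -
  have "partner w p' \<noteq> partner w p"
    using partner_inj[OF assms(1), of p p'] assms unfolding sink_opening_def by auto
  moreover have "\<not> interlaced w p p'"
    using assms(2,3) sink_at_iff[OF assms(1)] first_occ_self unfolding sink_opening_def by metis
  ultimately show ?thesis using assms(4,5) unfolding interlaced_def by auto
qed

lemma enclosing_sinks_0: "enclosing_sinks w 0 = {}"
  unfolding enclosing_sinks_def by auto

lemma enclosing_sinks_length: "dow w \<Longrightarrow> enclosing_sinks w (length w) = {}"
  using sink_opening_partner(1) unfolding enclosing_sinks_def by fastforce

lemma enclosing_sinks_cnext:
  "dow w \<Longrightarrow> y < length w \<Longrightarrow> enclosing_sinks w (cnext (length w) y) = enclosing_sinks w (Suc y)"
  using enclosing_sinks_0 enclosing_sinks_length unfolding cnext_def by auto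

lemma enclosing_sinks_Suc:
  assumes "dow w" "y < length w" "\<not> sink_at w y"
  shows "enclosing_sinks w (Suc y) = enclosing_sinks w y"
proof -
  have "p \<noteq> y" "partner w p \<noteq> y" if "sink_opening w p" for p
    using that assms sink_opening_partner(2)[OF assms(1)] unfolding sink_opening_def by auto
  then show ?thesis unfolding enclosing_sinks_def by (auto simp: less_Suc_eq_le le_less)
qed

lemma sink_opening_neq_partner:
  assumes "dow w" "sink_opening w p" "sink_opening w p'"
  shows "p' \<noteq> partner w p"
  using assms sink_opening_partner(3)[OF assms(1,2)] unfolding sink_opening_def by auto

lemma enclosing_sinks_Suc_partner:
  assumes "dow w" "sink_opening w p"
  shows "enclosing_sinks w (Suc (partner w p)) = enclosing_sinks w p"
proof -
  let ?q = "partner w p"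
  have "p' < Suc ?q \<and> Suc ?q \<le> partner w p' \<longleftrightarrow> p' < p \<and> p \<le> partner w p'"
    if p': "sink_opening w p'" for p'
  proof (cases "p' = p")
    case False
    have ne: "partner w p' \<noteq> ?q" "p' \<noteq> ?q" "partner w p' \<noteq> p"
      using False p' assms partner_inj[OF assms(1)] sink_opening_neq_partner[OF assms(1)]
      unfolding sink_opening_def by metis+
    show ?thesis
    proof
      assume h: "p' < Suc ?q \<and> Suc ?q \<le> partner w p'"
      have "\<not> p < p'"
      proof
        assume "p < p'"
        then have "partner w p' < ?q"
          using sink_intervals_nested[OF assms(1) assms(2) p'] h ne by auto
        then show False using h by auto
      qed
      then show "p' < p \<and> p \<le> partner w p'" using False h ne assms(2) unfolding sink_opening_def by auto
    next
      assume h: "p' < p \<and> p \<le> partner w p'"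
      then have "?q < partner w p'" using sink_intervals_nested[OF assms(1) p' assms(2)] ne by auto
      then show "p' < Suc ?q \<and> Suc ?q \<le> partner w p'" using h assms(2) unfolding sink_opening_def by auto
    qed
  qed (use assms(2) in \<open>auto simp: sink_opening_def\<close>)
  then show ?thesis unfolding enclosing_sinks_def by blast
qed

lemma enclosing_sinks_Suc_opening:
  assumes "dow w" "sink_opening w p"
  shows "enclosing_sinks w (Suc p) = enclosing_sinks w (partner w p)"
proof -
  let ?q = "partner w p"
  have "p' < Suc p \<and> Suc p \<le> partner w p' \<longleftrightarrow> p' < ?q \<and> ?q \<le> partner w p'"
    if p': "sink_opening w p'" for p'
  proof (cases "p' = p")
    case False
    have ne: "partner w p' \<noteq> ?q"
      using False p' assms partner_inj[OF assms(1)] unfolding sink_opening_def by metis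
    show ?thesis
    proof
      assume h: "p' < Suc p \<and> Suc p \<le> partner w p'"
      then have "?q < partner w p'"
        using False sink_intervals_nested[OF assms(1) p' assms(2)] by auto
      then show "p' < ?q \<and> ?q \<le> partner w p'" using h assms(2) unfolding sink_opening_def by auto
    next
      assume h: "p' < ?q \<and> ?q \<le> partner w p'"
      have "\<not> p < p'"
      proof
        assume "p < p'"
        then have "partner w p' < ?q" using sink_intervals_nested[OF assms(1) assms(2) p'] h by auto
        then show False using h by auto
      qed
      then show "p' < Suc p \<and> Suc p \<le> partner w p'" using False h ne assms(2) unfolding sink_opening_def by auto
    qed
  qed (use assms(2) in \<open>auto simp: sink_opening_def\<close>)
  then show ?thesis unfolding enclosing_sinks_def by blast
qed

lemma enclosing_sinks_word_sigma:
  assumes "dow w" "x < length w"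
  shows "enclosing_sinks w (word_sigma w x) = enclosing_sinks w x"
proof -
  have "enclosing_sinks w (word_sigma w x) = enclosing_sinks w (Suc (sink_jump w x))"
    using enclosing_sinks_cnext[OF assms(1) sink_jump_spec(1)[OF assms]] assms(2)
    unfolding word_sigma_def by simp
  also have "\<dots> = enclosing_sinks w x"
  proof (cases "sink_at w x")
    case True
    show ?thesis
    proof (cases "x < partner w x")
      case True
      then have "sink_opening w x" using assms \<open>sink_at w x\<close> unfolding sink_opening_def by simp
      then show ?thesis using enclosing_sinks_Suc_partner[OF assms(1)] \<open>sink_at w x\<close>
        unfolding sink_jump_def by simp
    next
      case False
      then have "sink_opening w (partner w x)"
        using sink_opening_if_sink_at[OF assms True] partner_spec(2)[OF assms] by (simp add: min_def)
      then show ?thesis using enclosing_sinks_Suc_opening[OF assms(1)] \<open>sink_at w x\<close>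
          partner_partner[OF assms] unfolding sink_jump_def by simp
    qed
  next
    case False
    then show ?thesis using enclosing_sinks_Suc[OF assms] unfolding sink_jump_def by simp
  qed
  finally show ?thesis .
qed

lemma enclosing_sinks_funpow_word_sigma:
  assumes "dow w" "x < length w"
  shows "enclosing_sinks w ((word_sigma w ^^ k) x) = enclosing_sinks w x \<and> (word_sigma w ^^ k) x < length w"
  by (induction k) (auto simp: enclosing_sinks_word_sigma[OF assms(1)] word_sigma_less[OF assms(1)] assms)

lemma enclosing_sinks_partner_of_closing:
  assumes "dow w" "y < length w" "sink_at w y" "partner w y < y"
  shows "partner w y \<in> enclosing_sinks w y"
  using assms sink_opening_if_sink_at[OF assms(1-3)] partner_partner[OF assms(1,2)]
  unfolding enclosing_sinks_def by (simp add: min_def)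

lemma word_sigma_within_vertex:
  assumes "dow w" "y < length w" "z < length w" "enclosing_sinks w z = enclosing_sinks w y" "y < z"
  shows "y < word_sigma w y \<and> word_sigma w y \<le> z"
proof (cases "sink_at w y")
  case True
  show ?thesis
  proof (cases "y < partner w y")
    case True
    then have "sink_opening w y" using assms(2) \<open>sink_at w y\<close> unfolding sink_opening_def by simp
    have "partner w y < z"
    proof (rule ccontr)
      assume "\<not> partner w y < z"
      then have "y \<in> enclosing_sinks w z"
        using \<open>sink_opening w y\<close> assms(5) unfolding enclosing_sinks_def by simp
      then show False using assms(4) unfolding enclosing_sinks_def by simp
    qed
    then have "word_sigma w y = Suc (partner w y)"
      using assms(2,3) \<open>sink_at w y\<close> unfolding word_sigma_def sink_jump_def cnext_def by simp
    then show ?thesis using True \<open>partner w y < z\<close> by simp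
  next
    case False
    then have "partner w y < y" using partner_spec(2)[OF assms(1,2)] by simp
    then have "partner w y \<in> enclosing_sinks w z"
      using enclosing_sinks_partner_of_closing[OF assms(1,2) True] assms(4) by simp
    then have "z \<le> y" using partner_partner[OF assms(1,2)] unfolding enclosing_sinks_def by simp
    then show ?thesis using assms(5) by simp
  qed
next
  case False
  then have "word_sigma w y = Suc y" using assms(2,3,5) unfolding word_sigma_def sink_jump_def cnext_def by simp
  then show ?thesis using assms(5) by simp
qed

lemma word_sigma_at_vertex_max:
  assumes "dow w" "y < length w" "z < length w" "enclosing_sinks w z = enclosing_sinks w y"
    and max: "\<forall>z'<length w. enclosing_sinks w z' = enclosing_sinks w y \<longrightarrow> z' \<le> y"
  shows "word_sigma w y \<le> z"
proof -
  have "word_sigma w y \<le> y"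
    using max word_sigma_less[OF assms(1,2)] enclosing_sinks_word_sigma[OF assms(1,2)] by simp
  from cnext_cases[of "length w" "sink_jump w y"] show ?thesis
  proof
    assume "cnext (length w) (sink_jump w y) = Suc (sink_jump w y)"
    then have "Suc (sink_jump w y) \<le> y" using \<open>word_sigma w y \<le> y\<close> assms(2) unfolding word_sigma_def by simp
    then have closing: "sink_at w y" "sink_jump w y = partner w y" "partner w y < y"
      unfolding sink_jump_def by (auto split: if_splits)
    then have "partner w y \<in> enclosing_sinks w z"
      using enclosing_sinks_partner_of_closing[OF assms(1,2)] assms(4) by simp
    then have "Suc (partner w y) \<le> z" unfolding enclosing_sinks_def by simp
    then show ?thesis using closing assms(2) \<open>cnext _ _ = _\<close> unfolding word_sigma_def by simp
  qed (use assms(2) in \<open>simp add: word_sigma_def\<close>)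
qed

lemma cyc_word_sigma:
  assumes "dow w" "x < length w"
  shows "cyc (word_sigma w) x = {y. y < length w \<and> enclosing_sinks w y = enclosing_sinks w x}"
proof -
  define C where "C = {y. y < length w \<and> enclosing_sinks w y = enclosing_sinks w x}"
  interpret cyclic_successor C "word_sigma w"
  proof
    show "finite C" unfolding C_def by simp
    show "word_sigma w y \<in> C" if "y \<in> C" for y
      using that word_sigma_less[OF assms(1)] enclosing_sinks_word_sigma[OF assms(1)] unfolding C_def by simp
    show "y < word_sigma w y \<and> word_sigma w y \<le> z" if "y \<in> C" "z \<in> C" "y < z" for y z
      using that word_sigma_within_vertex[OF assms(1), of y z] unfolding C_def by simp
    show "word_sigma w y \<le> z" if "y \<in> C" "z \<in> C" "\<forall>z\<in>C. z \<le> y" for y z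
      using that word_sigma_at_vertex_max[OF assms(1), of y z] unfolding C_def by simp
  qed
  have "C \<subseteq> cyc (word_sigma w) x" using reaches[of x] assms(2) unfolding C_def cyc_def by auto
  moreover have "cyc (word_sigma w) x \<subseteq> C"
    unfolding cyc_def C_def using enclosing_sinks_funpow_word_sigma[OF assms] by auto
  ultimately show ?thesis unfolding C_def by blast
qed

text \<open>Domination by sinks is exactly what separates the two ends of every edge.\<close>

lemma enclosing_sinks_partner_neq_first:
  assumes "sink_dominated w" "x < length w" "x < partner w x"
  shows "enclosing_sinks w (partner w x) \<noteq> enclosing_sinks w x"
proof (cases "sink_at w x")
  case True
  then have "x \<in> enclosing_sinks w (partner w x)" "x \<notin> enclosing_sinks w x"
    using assms(2,3) unfolding enclosing_sinks_def sink_opening_def by auto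
  then show ?thesis by blast
next
  case False
  have dw: "dow w" using assms(1) unfolding sink_dominated_def by simp
  obtain j where j: "j < length w" "sink_at w j"
    "interlaced w (first_occ w j) x \<or> interlaced w x (first_occ w j)"
    using False assms sink_dominated_iff[OF dw] first_occ_self[OF assms(3)] by metis
  have p: "sink_opening w (first_occ w j)"
    using first_occ_spec[OF dw j(1)] j(2) unfolding sink_opening_def by simp
  from j(3) show ?thesis
  proof
    assume "interlaced w (first_occ w j) x"
    then have "first_occ w j \<in> enclosing_sinks w x" "first_occ w j \<notin> enclosing_sinks w (partner w x)"
      using p unfolding enclosing_sinks_def interlaced_def by auto
    then show ?thesis by blast
  next
    assume "interlaced w x (first_occ w j)"
    then have "first_occ w j \<notin> enclosing_sinks w x" "first_occ w j \<in> enclosing_sinks w (partner w x)"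
      using p unfolding enclosing_sinks_def interlaced_def by auto
    then show ?thesis by blast
  qed
qed

lemma enclosing_sinks_partner_neq:
  assumes "sink_dominated w" "x < length w"
  shows "enclosing_sinks w (partner w x) \<noteq> enclosing_sinks w x"
proof (cases "x < partner w x")
  case False
  have dw: "dow w" using assms(1) unfolding sink_dominated_def by simp
  have "partner w x < partner w (partner w x)" "partner w x < length w"
    using False partner_spec[OF dw assms(2)] partner_partner[OF dw assms(2)] by auto
  then show ?thesis
    using enclosing_sinks_partner_neq_first[OF assms(1)] partner_partner[OF dw assms(2)] by metis
qed (use enclosing_sinks_partner_neq_first assms in auto)

lemma word_map_loopless:
  assumes "sink_dominated w"
  shows "loopless {0..<length w} (word_sigma w) (word_alpha w)"
proof -
  have dw: "dow w" using assms unfolding sink_dominated_def by simp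
  have "permutation (word_sigma w)"
    using permutes_imp_permutation[OF _ word_sigma_permutes[OF dw]] by simp
  moreover have "word_alpha w (word_alpha w b) = b" if "b \<in> {0..<length w}" for b
    using that partner_spec[OF dw] partner_partner[OF dw] unfolding word_alpha_def by auto
  moreover have "word_alpha w b \<notin> cyc (word_sigma w) b" if "b \<in> {0..<length w}" for b
    using that cyc_word_sigma[OF dw] enclosing_sinks_partner_neq[OF assms] unfolding word_alpha_def by auto
  ultimately show ?thesis using loopless_iff by blast
qed

lemma word_map_in_rooted_loopless_maps:
  assumes "sink_dominated w" "length w = 2 * m" "1 \<le> m"
  shows "word_map w \<in> rooted_loopless_maps m"
proof -
  have dw: "dow w" using assms unfolding sink_dominated_def by simp
  have alpha: "word_alpha w b \<in> {0..<length w} \<and> word_alpha w b \<noteq> b \<and> word_alpha w (word_alpha w b) = b"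
    if "b \<in> {0..<length w}" for b
    using that partner_spec[OF dw] partner_partner[OF dw] unfolding word_alpha_def by auto
  have "is_map {0..<length w} (word_sigma w) (word_alpha w)"
    unfolding is_map_iff using word_sigma_permutes[OF dw] word_alpha_permutes[OF dw] alpha
      word_map_connected[OF dw] by auto
  moreover have "card (map_edges {0..<length w} (word_alpha w)) = m"
    using card_map_edges[of "{0..<length w}" "word_alpha w"] alpha assms(2) by auto
  ultimately show ?thesis
    using word_map_loopless[OF assms(1)] assms(2,3) unfolding word_map_def rooted_loopless_maps_def by auto
qed

section \<open>Reading the word off its map\<close>

lemma cyc_word_sigma_inside_sink:
  assumes "dow w" "k < length w" "sink_at w k" "partner w k < k" "y \<in> cyc (word_sigma w) k"
  shows "partner w k < y \<and> y \<le> k"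
proof -
  have "partner w k \<in> enclosing_sinks w y"
    using enclosing_sinks_partner_of_closing[OF assms(1-4)] cyc_word_sigma[OF assms(1,2)] assms(5) by auto
  then show ?thesis using partner_partner[OF assms(1,2)] unfolding enclosing_sinks_def by simp
qed

lemma enclosing_sinks_innermost:
  assumes "dow w" "enclosing_sinks w x \<noteq> {}" "p = Max (enclosing_sinks w x)"
  shows "enclosing_sinks w (partner w p) = enclosing_sinks w x"
proof -
  have fin: "finite (enclosing_sinks w x)" unfolding enclosing_sinks_def sink_opening_def by auto
  have p: "p \<in> enclosing_sinks w x" "\<And>p'. p' \<in> enclosing_sinks w x \<Longrightarrow> p' \<le> p"
    using Max_in[OF fin assms(2)] Max_ge[OF fin] assms(3) by auto
  then have sp: "sink_opening w p" "p < x" "x \<le> partner w p" unfolding enclosing_sinks_def by auto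
  let ?q = "partner w p"
  have "p' < ?q \<and> ?q \<le> partner w p' \<longleftrightarrow> p' < x \<and> x \<le> partner w p'" if p': "sink_opening w p'" for p'
  proof (cases "p' = p")
    case False
    show ?thesis
    proof
      assume h: "p' < ?q \<and> ?q \<le> partner w p'"
      have "\<not> p < p'"
      proof
        assume "p < p'"
        then have "partner w p' < ?q" using sink_intervals_nested[OF assms(1) sp(1) p'] h by auto
        then show False using h by auto
      qed
      then show "p' < x \<and> x \<le> partner w p'" using False sp h by auto
    next
      assume h: "p' < x \<and> x \<le> partner w p'"
      then have "p' < p" using p(2)[of p'] p' False unfolding enclosing_sinks_def by fastforce
      moreover have "p < partner w p'" using h sp by auto
      ultimately have "?q < partner w p'" using sink_intervals_nested[OF assms(1) p' sp(1)] by auto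
      then show "p' < ?q \<and> ?q \<le> partner w p'" using \<open>p' < p\<close> sp(1) unfolding sink_opening_def by auto
    qed
  qed (use sp in \<open>auto simp: sink_opening_def\<close>)
  then show ?thesis unfolding enclosing_sinks_def by blast
qed

lemma cyc_word_sigma_escapes_closing:
  assumes "sink_dominated w" "k < length w" "\<not> sink_at w k" "partner w k < k"
  shows "\<exists>y\<in>cyc (word_sigma w) (partner w k). y = 0 \<or> (k < y \<and> y < length w)"
proof -
  have dw: "dow w" using assms(1) unfolding sink_dominated_def by simp
  let ?a = "partner w k"
  have a: "?a < length w" "partner w ?a = k" "\<not> sink_at w ?a"
    using partner_spec[OF dw assms(2)] partner_partner[OF dw assms(2)] sink_at_partner[OF dw assms(2)]
      assms(3) by auto
  show ?thesis
  proof (cases "enclosing_sinks w ?a = {}")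
    case True
    then have "0 \<in> cyc (word_sigma w) ?a" using cyc_word_sigma[OF dw a(1)] enclosing_sinks_0 a(1) by auto
    then show ?thesis by auto
  next
    case False
    define p where "p = Max (enclosing_sinks w ?a)"
    have fin: "finite (enclosing_sinks w ?a)" unfolding enclosing_sinks_def sink_opening_def by auto
    have sp: "sink_opening w p" "p < ?a" "?a \<le> partner w p"
      using Max_in[OF fin False] unfolding p_def enclosing_sinks_def by auto
    let ?q = "partner w p"
    have q: "?q < length w" "sink_at w ?q" using sink_opening_partner[OF dw sp(1)] by auto
    have "k < ?q"
    proof (rule ccontr)
      assume "\<not> k < ?q"
      then have "?q < k" using q(2) assms(3) by (cases "?q = k") auto
      moreover have "?a < ?q" using sp(3) q(2) a(3) by (cases "?a = ?q") auto
      ultimately have "interlaced w p ?a" using sp a(2) unfolding interlaced_def by auto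
      then show False
        using sink_at_iff[OF dw, of p] sp(1) first_occ_self a(1) unfolding sink_opening_def by metis
    qed
    moreover have "?q \<in> cyc (word_sigma w) ?a"
      using cyc_word_sigma[OF dw a(1)] enclosing_sinks_innermost[OF dw False p_def] q(1) by auto
    ultimately show ?thesis using q(1) by blast
  qed
qed

lemma cyc_word_sigma_escapes:
  assumes "sink_dominated w" "k < length w" "\<not> sink_at w k"
  shows "\<exists>y\<in>cyc (word_sigma w) (partner w k). y = 0 \<or> (k < y \<and> y < length w)"
proof (cases "partner w k < k")
  case False
  then have "k < partner w k" "partner w k < length w"
    using assms partner_spec unfolding sink_dominated_def by (metis linorder_neqE_nat)+
  then show ?thesis using cyc_self by blast
qed (use cyc_word_sigma_escapes_closing[OF assms] in blast)

locale word_map_iso =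
  fixes w w' :: "nat list" and f :: "nat \<Rightarrow> nat"
  assumes dominated: "sink_dominated w" "sink_dominated w'"
    and same_length: "length w' = length w"
    and bij: "bij_betw f {0..<length w} {0..<length w}"
    and sigma: "\<And>b. b < length w \<Longrightarrow> f (word_sigma w b) = word_sigma w' (f b)"
    and alpha: "\<And>b. b < length w \<Longrightarrow> f (word_alpha w b) = word_alpha w' (f b)"
    and root: "f 0 = 0"
begin

lemma dow: "dow w" "dow w'"
  using dominated unfolding sink_dominated_def by auto

lemma f_less: "b < length w \<Longrightarrow> f b < length w"
  using bij_betwE[OF bij] by auto

lemma f_inj: "a < length w \<Longrightarrow> b < length w \<Longrightarrow> f a = f b \<Longrightarrow> a = b"
  using bij unfolding bij_betw_def inj_on_def by auto

lemma f_partner: "b < length w \<Longrightarrow> f (partner w b) = partner w' (f b)"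
  using alpha f_less same_length unfolding word_alpha_def by auto

lemma f_sink_jump:
  assumes "k < length w" "f (cnext (length w) k) = cnext (length w) k"
  shows "f (sink_jump w k) = sink_jump w' k"
proof -
  have "word_sigma w' (f (sink_jump w k)) = word_sigma w' (sink_jump w' k)"
    using sigma[OF sink_jump_spec(1)[OF dow(1) assms(1)]] word_sigma_sink_jump[OF dow(1) assms(1)]
      word_sigma_sink_jump[OF dow(2)] assms same_length by simp
  then show ?thesis
    using word_sigma_inj[OF dow(2)] f_less sink_jump_spec(1)[OF dow(1) assms(1)]
      sink_jump_spec(1)[OF dow(2)] assms(1) same_length by simp
qed

lemma image_cyc: "x < length w \<Longrightarrow> f ` cyc (word_sigma w) x = cyc (word_sigma w') (f x)"
  using image_cyc_conj(1)[of "{..<length w}" "word_sigma w" f "word_sigma w'" x]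
    sigma word_sigma_less[OF dow(1)] by auto

lemma inverse:
  assumes "0 < length w"
  shows "word_map_iso w' w (inv_into {0..<length w} f)"
proof
  let ?g = "inv_into {0..<length w} f"
  show "bij_betw ?g {0..<length w'} {0..<length w'}"
    using bij_betw_inv_into[OF bij] same_length by simp
  show "?g (word_sigma w' b) = word_sigma w (?g b)" if "b < length w'" for b
    using bij_betw_inv_into_conj[OF bij, of "word_sigma w" "word_sigma w'" b]
      word_sigma_less[OF dow(1)] sigma that same_length by auto
  show "?g (word_alpha w' b) = word_alpha w (?g b)" if "b < length w'" for b
    using bij_betw_inv_into_conj[OF bij, of "word_alpha w" "word_alpha w'" b]
      word_alpha_less[OF dow(1)] alpha that same_length by auto
  show "?g 0 = 0"
    using bij_betw_inv_into_left[OF bij, of 0] root assms by simp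
qed (use dominated same_length in auto)

lemma sink_at_transfer:
  assumes k: "1 \<le> k" "k < length w"
    and fixed: "\<And>y. y < length w \<Longrightarrow> y = 0 \<or> k < y \<Longrightarrow> f y = y"
    and sink: "sink_at w k"
  shows "sink_at w' k"
proof (rule ccontr)
  assume nsink: "\<not> sink_at w' k"
  have "f (cnext (length w) k) = cnext (length w) k"
    using fixed[of "cnext (length w) k"] k root unfolding cnext_def by auto
  then have "f (partner w k) = k"
    using f_sink_jump[OF k(2)] sink nsink unfolding sink_jump_def by simp
  have pk: "partner w k < length w" "partner w k \<noteq> k" "partner w (partner w k) = k"
    using partner_spec[OF dow(1) k(2)] partner_partner[OF dow(1) k(2)] by auto
  have "\<not> (partner w k = 0 \<or> k < partner w k)"
  proof
    assume "partner w k = 0 \<or> k < partner w k"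
    then have "f (partner w k) = partner w k" by (rule fixed[OF pk(1)])
    then show False using \<open>f (partner w k) = k\<close> pk(2) by simp
  qed
  then have "partner w k \<noteq> 0 \<and> partner w k < k" using pk(2) by auto
  then have inside: "y \<noteq> 0 \<and> y \<le> k" if "y \<in> cyc (word_sigma w) k" for y
    using cyc_word_sigma_inside_sink[OF dow(1) k(2) sink _ that] by auto
  have "f k = partner w' k"
    using f_partner[OF pk(1)] pk(3) \<open>f (partner w k) = k\<close> by simp
  obtain y where "y \<in> cyc (word_sigma w') (partner w' k)" "y = 0 \<or> (k < y \<and> y < length w')"
    using cyc_word_sigma_escapes[OF dominated(2) _ nsink] k(2) same_length by auto
  then have y: "y \<in> cyc (word_sigma w') (f k)" "y = 0 \<or> (k < y \<and> y < length w)"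
    using \<open>f k = partner w' k\<close> same_length by simp_all
  then have "y \<in> f ` cyc (word_sigma w) k" using image_cyc[OF k(2)] by simp
  then obtain z where z: "z \<in> cyc (word_sigma w) k" "f z = y" by (rule imageE) simp
  have "z < length w" using z(1) cyc_word_sigma[OF dow(1) k(2)] by auto
  moreover have "y < length w" using y(2) k by auto
  moreover have "f y = y" using y(2) by (intro fixed \<open>y < length w\<close>) auto
  ultimately have "z = y" using f_inj[of z y] z(2) by simp
  then show False using inside[OF z(1)] y(2) by auto
qed

lemma fixes_position:
  assumes k: "1 \<le> k" "k < length w"
    and fixed: "\<And>y. y < length w \<Longrightarrow> y = 0 \<or> k < y \<Longrightarrow> f y = y"
  shows "f k = k"
proof -
  interpret inv: word_map_iso w' w "inv_into {0..<length w} f"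
    using k by (intro inverse) auto
  have "inv_into {0..<length w} f y = y" if "y < length w" "y = 0 \<or> k < y" for y
    using bij_betw_inv_into_left[OF bij, of y] fixed[OF that] that by simp
  then have "sink_at w' k \<Longrightarrow> sink_at w k"
    using inv.sink_at_transfer k same_length by simp
  then have same_sink: "sink_at w k \<longleftrightarrow> sink_at w' k"
    using sink_at_transfer[OF k fixed] by blast
  have "f (cnext (length w) k) = cnext (length w) k"
    using k root fixed[of "cnext (length w) k"] unfolding cnext_def by auto
  then have jump: "f (sink_jump w k) = sink_jump w' k" using f_sink_jump k(2) by simp
  show ?thesis
  proof (cases "sink_at w k")
    case True
    then have "f (partner w k) = partner w' k" using jump same_sink unfolding sink_jump_def by simp
    then show ?thesis
      using f_partner[OF partner_spec(1)[OF dow(1) k(2)]] partner_partner[OF dow(1) k(2)]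
        partner_partner[OF dow(2)] k(2) same_length by simp
  next
    case False
    then show ?thesis using jump same_sink unfolding sink_jump_def by simp
  qed
qed

text \<open>Positions are fixed one by one from the end of the word towards its start.\<close>

lemma identity:
  assumes "i < length w"
  shows "f i = i"
proof -
  define fixed_from where "fixed_from k \<longleftrightarrow> (\<forall>y<length w. y = 0 \<or> k \<le> y \<longrightarrow> f y = y)" for k
  have "fixed_from 1"
  proof (rule inc_induct)
    show "1 \<le> length w" using assms by simp
    show "fixed_from (length w)" using root unfolding fixed_from_def by auto
    fix k assume "1 \<le> k" "k < length w" "fixed_from (Suc k)"
    have "f k = k"
    proof (rule fixes_position)
      show "f y = y" if "y < length w" "y = 0 \<or> k < y" for y
        using \<open>fixed_from (Suc k)\<close> that unfolding fixed_from_def by (auto simp: Suc_le_eq)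
    qed (use \<open>1 \<le> k\<close> \<open>k < length w\<close> in auto)
    then show "fixed_from k" using \<open>fixed_from (Suc k)\<close> unfolding fixed_from_def by (auto simp: le_less Suc_le_eq)
  qed
  then show ?thesis using assms root unfolding fixed_from_def by (cases "i = 0") auto
qed

end

context
  fixes g :: "nat \<Rightarrow> nat" and w :: "nat list"
  assumes inj: "inj_on g (set w)" and dw: "dow w"
begin

lemma dow_map: "dow (map g w)"
  using dw count_list_inj_map[OF inj] unfolding dow_def by auto

lemma partner_map: "i < length w \<Longrightarrow> partner (map g w) i = partner w i"
  using partner_eqI[OF dow_map, of i "partner w i"] partner_spec[OF dw, of i] inj
  by (auto simp: inj_on_def)

lemma interlaced_map:
  assumes "i < length w"
  shows "interlaced (map g w) i j \<longleftrightarrow> interlaced w i j"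
  using partner_map partner_spec(1)[OF dw assms] assms unfolding interlaced_def
  by (cases "j < length w") auto

lemma first_occ_map: "i < length w \<Longrightarrow> first_occ (map g w) i = first_occ w i"
  using partner_map unfolding first_occ_def by simp

lemma sink_at_map: "i < length w \<Longrightarrow> sink_at (map g w) i \<longleftrightarrow> sink_at w i"
  using sink_at_iff[OF dw] sink_at_iff[OF dow_map] first_occ_map first_occ_spec(1)[OF dw]
    interlaced_map by simp

lemma sink_dominated_map: "sink_dominated (map g w) \<longleftrightarrow> sink_dominated w"
  using sink_dominated_iff[OF dw] sink_dominated_iff[OF dow_map] sink_at_map first_occ_map
    interlaced_map first_occ_spec(1)[OF dw] by auto

lemma word_sigma_map: "word_sigma (map g w) = word_sigma w"
  using sink_at_map partner_map unfolding word_sigma_def sink_jump_def by (intro ext) simp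

lemma word_alpha_map: "word_alpha (map g w) = word_alpha w"
  using partner_map unfolding word_alpha_def by (intro ext) simp

lemma word_map_map: "word_map (map g w) = word_map w"
  unfolding word_map_def using word_sigma_map word_alpha_map by simp

end

lemma renaming_rel_equiv: "equiv UNIV renaming_rel"
proof (rule equivI)
  show "refl renaming_rel" unfolding renaming_rel_def refl_on_def by (auto intro: exI[of _ id])
  show "sym renaming_rel"
  proof (rule symI)
    fix u v assume "(u, v) \<in> renaming_rel"
    then obtain g where g: "inj_on g (set u)" "v = map g u" unfolding renaming_rel_def by auto
    have "map (inv_into (set u) g) v = u" using g by (simp add: map_idI)
    moreover have "inj_on (inv_into (set u) g) (set v)" using g by (simp add: inj_on_inv_into)
    ultimately show "(v, u) \<in> renaming_rel" unfolding renaming_rel_def by auto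
  qed
  show "trans renaming_rel"
  proof (rule transI)
    fix u v x assume "(u, v) \<in> renaming_rel" "(v, x) \<in> renaming_rel"
    then obtain g h where "inj_on g (set u)" "v = map g u" "inj_on h (set v)" "x = map h v"
      unfolding renaming_rel_def by auto
    then show "(u, x) \<in> renaming_rel" unfolding renaming_rel_def by (auto intro: comp_inj_on)
  qed
  show "renaming_rel \<subseteq> UNIV \<times> UNIV" by simp
qed

lemma renaming_rel_if_same_partner:
  assumes "dow w" "dow v" "length v = length w" "\<And>i. i < length w \<Longrightarrow> partner v i = partner w i"
  shows "(w, v) \<in> renaming_rel"
proof -
  define g where "g x = v ! (SOME i. i < length w \<and> w!i = x)" for x
  have g: "g (w!i) = v!i" if i: "i < length w" for i
  proof -
    define j where "j = (SOME j. j < length w \<and> w!j = w!i)"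
    have "j < length w \<and> w!j = w!i" unfolding j_def by (rule someI_ex) (use i in auto)
    then have "j = i \<or> j = partner w i" using nth_eq_nth_iff_partner[OF assms(1) i] by auto
    moreover have "v ! partner w i = v!i" using assms(3,4) partner_spec(3)[OF assms(2)] i by metis
    ultimately show ?thesis unfolding g_def j_def[symmetric] by auto
  qed
  have "map g w = v" using g assms(3) by (intro nth_equalityI) auto
  moreover have "inj_on g (set w)"
  proof (rule inj_onI)
    fix x y assume "x \<in> set w" "y \<in> set w" "g x = g y"
    then obtain i j where ij: "i < length w" "j < length w" "x = w!i" "y = w!j" "v!j = v!i"
      using g by (auto simp: in_set_conv_nth)
    then have "j = i \<or> j = partner v i" using nth_eq_nth_iff_partner[OF assms(2)] assms(3) by auto
    then show "x = y" using ij assms(4) partner_spec(3)[OF assms(1) ij(1)] by auto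
  qed
  ultimately show ?thesis unfolding renaming_rel_def by auto
qed

lemma renaming_rel_if_word_map_iso:
  assumes "sink_dominated w" "sink_dominated v" "length v = length w"
    and "(word_map w, word_map v) \<in> rmap_iso"
  shows "(w, v) \<in> renaming_rel"
proof -
  obtain f where f: "bij_betw f {0..<length w} {0..<length w}"
    "\<forall>b\<in>{0..<length w}. f (word_sigma w b) = word_sigma v (f b) \<and> f (word_alpha w b) = word_alpha v (f b)"
    "f 0 = 0"
    using assms(3,4) unfolding word_map_def rmap_iso_def by auto
  interpret word_map_iso w v f using assms(1-3) f by unfold_locales auto
  have "word_alpha w i = word_alpha v i" if "i < length w" for i
    using identity[OF that] identity[OF word_alpha_less[OF dow(1) that]] alpha[OF that] by simp
  then show ?thesis
    using renaming_rel_if_same_partner[OF dow(1,2) assms(3)] assms(3) unfolding word_alpha_def by auto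
qed

lemma sink_dominated_imp_dow: "sink_dominated w \<Longrightarrow> dow w"
  unfolding sink_dominated_def by simp

lemma partner_embedding:
  assumes "dow w" "dow v" "j < length v"
    and h: "\<And>j. j < length v \<Longrightarrow> h j < length w \<and> w ! h j = g (v!j)"
    and h_inj: "\<And>i j. i < length v \<Longrightarrow> j < length v \<Longrightarrow> h i = h j \<Longrightarrow> i = j"
  shows "partner w (h j) = h (partner v j)"
  using partner_eqI[OF assms(1), of "h j" "h (partner v j)"] partner_spec[OF assms(2,3)]
    h[OF assms(3)] h[OF partner_spec(1)[OF assms(2,3)]] h_inj[OF partner_spec(1)[OF assms(2,3)] assms(3)]
  by auto

text \<open>The letters of \<open>v\<close> keep their relative order in \<open>w\<close>, and no letter of \<open>v\<close> gains an arc
  towards a new letter; arcs from new letters are allowed.\<close>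

locale word_embedding =
  fixes v w :: "nat list" and h :: "nat \<Rightarrow> nat"
  assumes dow_v: "dow v" and dow_w: "dow w"
    and h_less: "\<And>j. j < length v \<Longrightarrow> h j < length w"
    and h_less_iff: "\<And>i j. i < length v \<Longrightarrow> j < length v \<Longrightarrow> h i < h j \<longleftrightarrow> i < j"
    and h_partner: "\<And>j. j < length v \<Longrightarrow> partner w (h j) = h (partner v j)"
    and no_new_arc: "\<And>j y. j < length v \<Longrightarrow> y < length w \<Longrightarrow> interlaced w (h (first_occ v j)) y \<Longrightarrow>
      \<exists>b<length v. y = h b"
begin

lemma h_le_iff: "i < length v \<Longrightarrow> j < length v \<Longrightarrow> h i \<le> h j \<longleftrightarrow> i \<le> j"
  using h_less_iff by (meson not_less)

lemma first_occ_h: "j < length v \<Longrightarrow> first_occ w (h j) = h (first_occ v j)"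
  using h_partner h_le_iff partner_spec(1)[OF dow_v] unfolding first_occ_def by (auto simp: min_def)

lemma interlaced_h:
  "a < length v \<Longrightarrow> b < length v \<Longrightarrow> interlaced w (h a) (h b) \<longleftrightarrow> interlaced v a b"
  using h_partner h_less_iff partner_spec(1)[OF dow_v] unfolding interlaced_def by auto

lemma sink_at_h:
  assumes "j < length v"
  shows "sink_at w (h j) \<longleftrightarrow> sink_at v j"
proof -
  have fo: "first_occ v j < length v" using first_occ_spec(1)[OF dow_v assms] .
  have "(\<exists>y<length w. interlaced w (h (first_occ v j)) y) \<longleftrightarrow> (\<exists>b<length v. interlaced v (first_occ v j) b)"
    using no_new_arc[OF assms] interlaced_h[OF fo] h_less by blast
  then show ?thesis
    using sink_at_iff[OF dow_w h_less[OF assms]] sink_at_iff[OF dow_v assms] first_occ_h[OF assms] by simp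
qed

lemma sink_jump_h: "j < length v \<Longrightarrow> sink_jump w (h j) = h (sink_jump v j)"
  using sink_at_h h_partner unfolding sink_jump_def by simp

lemma dominated_at_h:
  assumes "sink_dominated v" "j < length v"
  shows "sink_at w (h j) \<or> (\<exists>i<length w. sink_at w i \<and>
    (interlaced w (first_occ w i) (first_occ w (h j)) \<or> interlaced w (first_occ w (h j)) (first_occ w i)))"
proof (cases "sink_at v j")
  case False
  then obtain i where i: "i < length v" "sink_at v i"
    "interlaced v (first_occ v i) (first_occ v j) \<or> interlaced v (first_occ v j) (first_occ v i)"
    using sink_dominated_iff[OF dow_v] assms by auto
  then have "interlaced w (first_occ w (h i)) (first_occ w (h j)) \<or>
      interlaced w (first_occ w (h j)) (first_occ w (h i))"
    using interlaced_h first_occ_h first_occ_spec(1)[OF dow_v] assms(2) by simp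
  then show ?thesis using i sink_at_h h_less by blast
qed (use sink_at_h assms(2) in simp)

end

section \<open>Inserting a chord\<close>

definition insert_chord :: "nat \<Rightarrow> nat list \<Rightarrow> nat list" where
  "insert_chord k v = 0 # take k (map Suc v) @ 0 # drop k (map Suc v)"

definition chord_shift :: "nat \<Rightarrow> nat \<Rightarrow> nat" where
  "chord_shift k j = (if j < k then Suc j else Suc (Suc j))"

lemma chord_shift_less_iff: "chord_shift k i < chord_shift k j \<longleftrightarrow> i < j"
  unfolding chord_shift_def by auto

lemma chord_shift_eq_iff: "chord_shift k i = chord_shift k j \<longleftrightarrow> i = j"
  unfolding chord_shift_def by auto

context
  fixes k :: nat and v :: "nat list"
  assumes dv: "dow v" and kv: "k \<le> length v"
begin

lemma length_insert_chord: "length (insert_chord k v) = length v + 2"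
  unfolding insert_chord_def using kv by auto

lemma chord_shift_less: "j < length v \<Longrightarrow> chord_shift k j < length (insert_chord k v)"
  unfolding chord_shift_def length_insert_chord by auto

lemma insert_chord_cases:
  assumes "y < length (insert_chord k v)"
  obtains "y = 0" | "y = Suc k" | j where "j < length v" "y = chord_shift k j"
proof -
  consider "y = 0" | "y = Suc k" | "0 < y" "y < Suc k" | "Suc k < y" by linarith
  then show ?thesis
  proof cases
    case 3
    then have "y = chord_shift k (y - 1)" "y - 1 < length v" using kv unfolding chord_shift_def by auto
    then show ?thesis using that(3) by blast
  next
    case 4
    then have "y = chord_shift k (y - 2)" "y - 2 < length v"
      using assms unfolding chord_shift_def length_insert_chord by auto
    then show ?thesis using that(3) by blast
  qed (use that in auto)
qed

lemma nth_insert_chord: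
  "insert_chord k v ! 0 = 0" "insert_chord k v ! Suc k = 0"
  "j < length v \<Longrightarrow> insert_chord k v ! chord_shift k j = Suc (v!j)"
  unfolding insert_chord_def chord_shift_def using kv by (auto simp: nth_append)

lemma dow_insert_chord: "dow (insert_chord k v)"
proof -
  have "count_list (map Suc v) x = (if x = 0 then 0 else 2)" if "x \<in> set (insert_chord k v)" for x
  proof (cases x)
    case (Suc y)
    then have "x \<in> set (map Suc v)" using that unfolding insert_chord_def
      by (auto dest: in_set_takeD in_set_dropD)
    then show ?thesis using dv Suc count_list_map_conv[of Suc v y] unfolding dow_def by (auto simp: inj_def)
  qed (auto simp: count_list_0_iff)
  moreover have "count_list (map Suc v) x = count_list (take k (map Suc v)) x + count_list (drop k (map Suc v)) x" for x
    using count_list_append[of "take k (map Suc v)" "drop k (map Suc v)" x] by simp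
  ultimately show ?thesis unfolding dow_def insert_chord_def by auto
qed

lemma partner_insert_chord: "partner (insert_chord k v) 0 = Suc k" "partner (insert_chord k v) (Suc k) = 0"
  using partner_eqI[OF dow_insert_chord, of 0 "Suc k"] partner_eqI[OF dow_insert_chord, of "Suc k" 0]
    length_insert_chord nth_insert_chord(1,2) kv by auto

lemma partner_insert_chord_shift:
  "j < length v \<Longrightarrow> partner (insert_chord k v) (chord_shift k j) = chord_shift k (partner v j)"
  using partner_embedding[OF dow_insert_chord dv, of j "chord_shift k" Suc] chord_shift_less
    nth_insert_chord(3) chord_shift_eq_iff by auto

lemma interlaced_insert_chord_new: "\<not> interlaced (insert_chord k v) x 0" "\<not> interlaced (insert_chord k v) x (Suc k)"
  unfolding interlaced_def using partner_insert_chord by auto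

lemma word_embedding_insert_chord: "word_embedding v (insert_chord k v) (chord_shift k)"
proof
  fix j y assume y: "y < length (insert_chord k v)"
    and "interlaced (insert_chord k v) (chord_shift k (first_occ v j)) y"
  with y show "\<exists>b<length v. y = chord_shift k b"
    using interlaced_insert_chord_new by (cases rule: insert_chord_cases) auto
qed (use dv dow_insert_chord chord_shift_less chord_shift_less_iff partner_insert_chord_shift in auto)

lemma interlaced_insert_chord_0:
  "j < length v \<Longrightarrow> interlaced (insert_chord k v) 0 (chord_shift k j) \<longleftrightarrow> j < k \<and> k \<le> partner v j"
  using partner_insert_chord partner_insert_chord_shift unfolding interlaced_def chord_shift_def by auto

lemma sink_at_insert_chord_0:
  "sink_at (insert_chord k v) 0 \<longleftrightarrow> \<not> (\<exists>j<length v. j < k \<and> k \<le> partner v j)"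
proof -
  have "(\<exists>y<length (insert_chord k v). interlaced (insert_chord k v) 0 y) \<longleftrightarrow>
      (\<exists>j<length v. j < k \<and> k \<le> partner v j)"
  proof
    assume "\<exists>y<length (insert_chord k v). interlaced (insert_chord k v) 0 y"
    then obtain y where "y < length (insert_chord k v)" "interlaced (insert_chord k v) 0 y" by blast
    then show "\<exists>j<length v. j < k \<and> k \<le> partner v j"
      using interlaced_insert_chord_new interlaced_insert_chord_0 by (cases rule: insert_chord_cases) auto
  qed (use interlaced_insert_chord_0 chord_shift_less in blast)
  then show ?thesis
    using sink_at_iff[OF dow_insert_chord, of 0] length_insert_chord partner_insert_chord
    unfolding first_occ_def by simp
qed

lemma sink_at_insert_chord_Suc: "sink_at (insert_chord k v) (Suc k) \<longleftrightarrow> sink_at (insert_chord k v) 0"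
  using sink_at_partner[OF dow_insert_chord, of 0] partner_insert_chord length_insert_chord by simp

lemma sink_dominated_insert_chord:
  assumes "sink_dominated v"
    and new: "sink_at (insert_chord k v) 0 \<or> (\<exists>j<length v. sink_at v j \<and> j < k \<and> k \<le> partner v j)"
  shows "sink_dominated (insert_chord k v)"
proof -
  let ?w = "insert_chord k v"
  interpret word_embedding v ?w "chord_shift k" by (rule word_embedding_insert_chord)
  have new_letter: "sink_at ?w 0 \<or> (\<exists>i<length ?w. sink_at ?w i \<and> interlaced ?w 0 (first_occ ?w i))"
  proof (cases "sink_at ?w 0")
    case False
    then obtain j where j: "j < length v" "sink_at v j" "j < k" "k \<le> partner v j" using new by blast
    then have "interlaced ?w 0 (first_occ ?w (chord_shift k j))"
      using interlaced_insert_chord_0 first_occ_h first_occ_self[of j v] by simp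
    then show ?thesis using j sink_at_h chord_shift_less by blast
  qed simp
  have first_occ_new: "first_occ ?w 0 = 0" "first_occ ?w (Suc k) = 0"
    unfolding first_occ_def using partner_insert_chord by auto
  show ?thesis unfolding sink_dominated_iff[OF dow_insert_chord]
  proof (intro allI impI)
    fix i assume "i < length ?w"
    then show "sink_at ?w i \<or> (\<exists>j<length ?w. sink_at ?w j \<and>
      (interlaced ?w (first_occ ?w j) (first_occ ?w i) \<or> interlaced ?w (first_occ ?w i) (first_occ ?w j)))"
      using new_letter first_occ_new sink_at_insert_chord_Suc dominated_at_h[OF assms(1)]
      by (cases rule: insert_chord_cases) auto
  qed
qed

lemma word_alpha_insert_chord:
  "word_alpha (insert_chord k v) 0 = Suc k" "word_alpha (insert_chord k v) (Suc k) = 0"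
  "j < length v \<Longrightarrow> word_alpha (insert_chord k v) (chord_shift k j) = chord_shift k (word_alpha v j)"
  unfolding word_alpha_def using length_insert_chord partner_insert_chord partner_insert_chord_shift kv
    chord_shift_less by auto

lemma word_sigma_insert_chord_shift:
  assumes "j < length v"
  shows "word_sigma (insert_chord k v) (chord_shift k j) =
    (if Suc (sink_jump v j) = k then Suc k else if word_sigma v j = 0 then 0 else chord_shift k (word_sigma v j))"
proof -
  interpret word_embedding v "insert_chord k v" "chord_shift k" by (rule word_embedding_insert_chord)
  have "sink_jump v j < length v" using sink_jump_spec(1)[OF dv assms] .
  then show ?thesis
    using sink_jump_h[OF assms] chord_shift_less[OF assms] length_insert_chord assms kv
    unfolding word_sigma_def cnext_def chord_shift_def by auto
qed

lemma word_sigma_insert_chord: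
  "word_sigma (insert_chord k v) 0 =
    (if sink_at (insert_chord k v) 0 then (if k = length v then 0 else Suc (Suc k)) else 1)"
  "word_sigma (insert_chord k v) (Suc k) =
    (if sink_at (insert_chord k v) 0 then 1 else (if k = length v then 0 else Suc (Suc k)))"
  unfolding word_sigma_def sink_jump_def cnext_def
  using length_insert_chord partner_insert_chord sink_at_insert_chord_Suc kv by auto

end

context
  fixes X Y :: "nat list"
  assumes dX: "dow X" and dY: "dow Y" and disj: "set X \<inter> set Y = {}"
begin

lemma dow_append: "dow (X @ Y)"
proof -
  have "count_list (X @ Y) x = 2" if "x \<in> set (X @ Y)" for x
  proof (cases "x \<in> set X")
    case True
    then have "x \<notin> set Y" using disj by auto
    then show ?thesis using True dX unfolding dow_def by auto
  next
    case False
    then show ?thesis using that dY unfolding dow_def by auto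
  qed
  then show ?thesis unfolding dow_def by auto
qed

lemma word_embedding_append_left: "word_embedding X (X @ Y) id"
proof
  show "partner (X @ Y) (id j) = id (partner X j)" if "j < length X" for j
    using partner_embedding[OF dow_append dX that, of id id] by (auto simp: nth_append)
  then show "\<exists>b<length X. y = id b"
    if "j < length X" "y < length (X @ Y)" "interlaced (X @ Y) (id (first_occ X j)) y" for j y
    using that first_occ_spec(1)[OF dX] partner_spec(1)[OF dX] unfolding interlaced_def
    by (metis id_apply order.strict_trans)
qed (use dX dow_append in auto)

lemma word_embedding_append_right: "word_embedding Y (X @ Y) (\<lambda>j. length X + j)"
proof
  fix j y assume "j < length Y" "y < length (X @ Y)" "interlaced (X @ Y) (length X + first_occ Y j) y"
  then show "\<exists>b<length Y. y = length X + b" unfolding interlaced_def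
    by (intro exI[of _ "y - length X"]) auto
qed (use dY dow_append partner_embedding[OF dow_append dY, of _ "\<lambda>j. length X + j" id]
  in \<open>auto simp: nth_append\<close>)

lemma sink_dominated_append:
  assumes "sink_dominated X" "sink_dominated Y"
  shows "sink_dominated (X @ Y)"
  unfolding sink_dominated_iff[OF dow_append]
proof (intro allI impI)
  fix i assume "i < length (X @ Y)"
  then consider "i < length X" | j where "j < length Y" "i = length X + j"
    by (metis add_diff_inverse_nat length_append nat_add_left_cancel_less)
  then show "sink_at (X @ Y) i \<or> (\<exists>j<length (X @ Y). sink_at (X @ Y) j \<and>
    (interlaced (X @ Y) (first_occ (X @ Y) j) (first_occ (X @ Y) i) \<or>
     interlaced (X @ Y) (first_occ (X @ Y) i) (first_occ (X @ Y) j)))"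
    using word_embedding.dominated_at_h[OF word_embedding_append_left assms(1)]
      word_embedding.dominated_at_h[OF word_embedding_append_right assms(2)] by cases auto
qed

lemma sink_at_insert_chord_append: "sink_at (insert_chord (length X) (X @ Y)) 0"
proof -
  interpret word_embedding X "X @ Y" id by (rule word_embedding_append_left)
  have "length X \<le> length (X @ Y)" by simp
  with dow_append show ?thesis
    using sink_at_insert_chord_0 h_partner partner_spec(1)[OF dX] by (metis id_apply leD)
qed

lemma insert_chord_append_left:
  assumes j: "j < length X"
  defines "w \<equiv> insert_chord (length X) (X @ Y)"
  shows "word_alpha w (Suc j) = Suc (word_alpha X j)"
    and "word_sigma w (Suc j) = (if word_sigma X j = 0 then Suc (length X) else Suc (word_sigma X j))"
proof -
  interpret word_embedding X "X @ Y" id by (rule word_embedding_append_left)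
  have le: "length X \<le> length (X @ Y)" by simp
  have shift: "chord_shift (length X) i = Suc i" if "i < length X" for i
    using that unfolding chord_shift_def by simp
  have "word_alpha (X @ Y) j = word_alpha X j" using h_partner[OF j] j unfolding word_alpha_def by simp
  then show "word_alpha w (Suc j) = Suc (word_alpha X j)"
    using word_alpha_insert_chord(3)[OF dow_append le, of j] shift[OF j]
      shift[OF word_alpha_less[OF dX j]] j unfolding w_def by simp
  have t: "sink_jump (X @ Y) j = sink_jump X j" "sink_jump X j < length X"
    using sink_jump_h[OF j] sink_jump_spec(1)[OF dX j] by simp_all
  have "word_sigma X j = cnext (length X) (sink_jump X j)"
    "word_sigma (X @ Y) j = cnext (length (X @ Y)) (sink_jump X j)"
    using t(1) j unfolding word_sigma_def by simp_all
  then show "word_sigma w (Suc j) = (if word_sigma X j = 0 then Suc (length X) else Suc (word_sigma X j))"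
    using word_sigma_insert_chord_shift[OF dow_append le, of j] j shift[OF j] t
      shift[of "Suc (sink_jump X j)"] unfolding w_def cnext_def by auto
qed

lemma insert_chord_append_right:
  assumes j: "j < length Y"
  defines "w \<equiv> insert_chord (length X) (X @ Y)" and "a \<equiv> length X"
  shows "word_alpha w (a + 2 + j) = a + 2 + word_alpha Y j"
    and "word_sigma w (a + 2 + j) = (if word_sigma Y j = 0 then 0 else a + 2 + word_sigma Y j)"
proof -
  interpret word_embedding Y "X @ Y" "\<lambda>j. a + j" unfolding a_def by (rule word_embedding_append_right)
  have le: "a \<le> length (X @ Y)" unfolding a_def by simp
  have shift: "chord_shift a (a + i) = a + 2 + i" for i unfolding chord_shift_def by simp
  have "word_alpha (X @ Y) (a + j) = a + word_alpha Y j"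
    using h_partner[OF j] j unfolding word_alpha_def a_def by simp
  then show "word_alpha w (a + 2 + j) = a + 2 + word_alpha Y j"
    using word_alpha_insert_chord(3)[OF dow_append le, of "a + j"] shift j
    unfolding w_def a_def by simp
  have t: "sink_jump (X @ Y) (a + j) = a + sink_jump Y j" "sink_jump Y j < length Y"
    using sink_jump_h[OF j] sink_jump_spec(1)[OF dY j] by simp_all
  have "word_sigma Y j = cnext (length Y) (sink_jump Y j)"
    "word_sigma (X @ Y) (a + j) = cnext (length (X @ Y)) (a + sink_jump Y j)"
    using t(1) j unfolding word_sigma_def a_def by simp_all
  then show "word_sigma w (a + 2 + j) = (if word_sigma Y j = 0 then 0 else a + 2 + word_sigma Y j)"
    using word_sigma_insert_chord_shift[OF dow_append le, of "a + j"] t j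
    unfolding w_def a_def cnext_def chord_shift_def by auto
qed

end

definition bridge_word :: "nat list \<Rightarrow> nat list \<Rightarrow> nat list" where
  "bridge_word X Y = insert_chord (length X) (map (\<lambda>x. 2 * x) X @ map (\<lambda>x. Suc (2 * x)) Y)"

lemma bridge_word_spec:
  assumes "sink_dominated X" "sink_dominated Y"
  defines "w \<equiv> bridge_word X Y" and "a \<equiv> length X" and "b \<equiv> length Y"
  shows "sink_dominated w" "length w = a + b + 2"
    "word_alpha w 0 = Suc a" "word_alpha w (Suc a) = 0"
    "word_sigma w 0 = (if b = 0 then 0 else Suc (Suc a))" "word_sigma w (Suc a) = 1"
    "j < a \<Longrightarrow> word_alpha w (Suc j) = Suc (word_alpha X j)"
    "j < a \<Longrightarrow> word_sigma w (Suc j) = (if word_sigma X j = 0 then Suc a else Suc (word_sigma X j))"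
    "j < b \<Longrightarrow> word_alpha w (a + 2 + j) = a + 2 + word_alpha Y j"
    "j < b \<Longrightarrow> word_sigma w (a + 2 + j) = (if word_sigma Y j = 0 then 0 else a + 2 + word_sigma Y j)"
proof -
  have inj: "inj_on (\<lambda>x. 2 * x) (set X)" "inj_on (\<lambda>x. Suc (2 * x)) (set Y)" by (auto simp: inj_on_def)
  have dow: "dow X" "dow Y" using assms(1,2) sink_dominated_imp_dow by auto
  define X' where "X' = map (\<lambda>x. 2 * x) X"
  define Y' where "Y' = map (\<lambda>x. Suc (2 * x)) Y"
  have X': "dow X'" "sink_dominated X'" "word_sigma X' = word_sigma X" "word_alpha X' = word_alpha X"
    "length X' = a"
    using dow_map[OF inj(1) dow(1)] sink_dominated_map[OF inj(1) dow(1)] word_sigma_map[OF inj(1) dow(1)]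
      word_alpha_map[OF inj(1) dow(1)] assms(1) unfolding X'_def a_def by auto
  have Y': "dow Y'" "sink_dominated Y'" "word_sigma Y' = word_sigma Y" "word_alpha Y' = word_alpha Y"
    "length Y' = b"
    using dow_map[OF inj(2) dow(2)] sink_dominated_map[OF inj(2) dow(2)] word_sigma_map[OF inj(2) dow(2)]
      word_alpha_map[OF inj(2) dow(2)] assms(2) unfolding Y'_def b_def by auto
  have disj: "set X' \<inter> set Y' = {}" unfolding X'_def Y'_def by auto presburger
  have XY: "dow (X' @ Y')" "sink_dominated (X' @ Y')" "a \<le> length (X' @ Y')"
    using dow_append[OF X'(1) Y'(1) disj] sink_dominated_append[OF X'(1) Y'(1) disj X'(2) Y'(2)] X'(5)
    by auto
  have w: "w = insert_chord a (X' @ Y')" unfolding w_def bridge_word_def X'_def Y'_def a_def ..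
  have "sink_at w 0" using sink_at_insert_chord_append[OF X'(1) Y'(1) disj] X'(5) unfolding w by simp
  then show "sink_dominated w" using sink_dominated_insert_chord[OF XY(1,3,2)] unfolding w by blast
  show "length w = a + b + 2" using length_insert_chord[OF XY(1,3)] X'(5) Y'(5) unfolding w by simp
  show "word_alpha w 0 = Suc a" "word_alpha w (Suc a) = 0"
    using word_alpha_insert_chord[OF XY(1,3)] unfolding w by simp_all
  show "word_sigma w 0 = (if b = 0 then 0 else Suc (Suc a))" "word_sigma w (Suc a) = 1"
    using word_sigma_insert_chord[OF XY(1,3)] \<open>sink_at w 0\<close> X'(5) Y'(5) unfolding w by simp_all
  show "j < a \<Longrightarrow> word_alpha w (Suc j) = Suc (word_alpha X j)"
    "j < a \<Longrightarrow> word_sigma w (Suc j) = (if word_sigma X j = 0 then Suc a else Suc (word_sigma X j))"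
    "j < b \<Longrightarrow> word_alpha w (a + 2 + j) = a + 2 + word_alpha Y j"
    "j < b \<Longrightarrow> word_sigma w (a + 2 + j) = (if word_sigma Y j = 0 then 0 else a + 2 + word_sigma Y j)"
    using insert_chord_append_left[OF X'(1) Y'(1) disj] insert_chord_append_right[OF X'(1) Y'(1) disj]
      X' Y' unfolding w by auto
qed

lemma nonbridge_word_spec:
  assumes "sink_dominated v" "0 < k" "k < length v" "enclosing_sinks v k \<noteq> {}"
  defines "w \<equiv> insert_chord k v"
  shows "sink_dominated w" "length w = length v + 2"
    "word_alpha w 0 = Suc k" "word_alpha w (Suc k) = 0"
    "word_sigma w 0 = 1" "word_sigma w (Suc k) = Suc (Suc k)"
    "j < length v \<Longrightarrow> word_alpha w (chord_shift k j) = chord_shift k (word_alpha v j)"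
    "j < length v \<Longrightarrow> word_sigma w (chord_shift k j) =
      (if word_sigma v j = 0 then 0 else if word_sigma v j = k then Suc k else chord_shift k (word_sigma v j))"
proof -
  have dv: "dow v" and kv: "k \<le> length v" using assms(1,3) sink_dominated_imp_dow by auto
  obtain p where "p \<in> enclosing_sinks v k" using assms(4) by auto
  then have p: "p < length v" "sink_at v p" "p < k" "k \<le> partner v p"
    unfolding enclosing_sinks_def sink_opening_def by auto
  then have not_sink: "\<not> sink_at w 0" using sink_at_insert_chord_0[OF dv kv] unfolding w_def by auto
  show "sink_dominated w" using sink_dominated_insert_chord[OF dv kv assms(1)] p unfolding w_def by blast
  show "length w = length v + 2" "word_alpha w 0 = Suc k" "word_alpha w (Suc k) = 0"
    "word_sigma w 0 = 1" "word_sigma w (Suc k) = Suc (Suc k)"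
    "j < length v \<Longrightarrow> word_alpha w (chord_shift k j) = chord_shift k (word_alpha v j)"
    using length_insert_chord[OF dv kv] word_alpha_insert_chord[OF dv kv] word_sigma_insert_chord[OF dv kv]
      not_sink assms(3) unfolding w_def by auto
  assume j: "j < length v"
  have "word_sigma v j = cnext (length v) (sink_jump v j)" using j unfolding word_sigma_def by simp
  then show "word_sigma w (chord_shift k j) =
      (if word_sigma v j = 0 then 0 else if word_sigma v j = k then Suc k else chord_shift k (word_sigma v j))"
    using word_sigma_insert_chord_shift[OF dv kv j] sink_jump_spec(1)[OF dv j] assms(2,3)
    unfolding w_def cnext_def by auto
qed

section \<open>Deleting the root edge of a loopless map\<close>

locale rooted_loopless_map =
  fixes B :: "nat set" and s a :: "nat \<Rightarrow> nat" and r :: nat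
  assumes map: "is_map B s a" and loopless: "loopless B s a" and root: "r \<in> B"
begin

lemma finite: "finite B"
  using map unfolding is_map_def by simp

lemma s_permutes: "s permutes B" and a_permutes: "a permutes B"
  using map unfolding is_map_def by simp_all

lemma a_neq: "b \<in> B \<Longrightarrow> a b \<noteq> b" and a_a: "b \<in> B \<Longrightarrow> a (a b) = b"
  using map unfolding is_map_def by simp_all

lemma s_in: "b \<in> B \<Longrightarrow> s b \<in> B" and a_in: "b \<in> B \<Longrightarrow> a b \<in> B"
  using permutes_in_image[OF s_permutes] permutes_in_image[OF a_permutes] by simp_all

lemma s_out: "b \<notin> B \<Longrightarrow> s b = b" and a_out: "b \<notin> B \<Longrightarrow> a b = b"
  using permutes_not_in[OF s_permutes] permutes_not_in[OF a_permutes] by simp_all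

lemma s_inj: "s x = s y \<Longrightarrow> x = y" and a_inj: "a x = a y \<Longrightarrow> x = y"
  using inj_eq[OF permutes_inj[OF s_permutes]] inj_eq[OF permutes_inj[OF a_permutes]] by simp_all

lemma permutation_s: "permutation s"
  using permutes_imp_permutation[OF finite s_permutes] .

lemma connected: "b \<in> B \<Longrightarrow> c \<in> B \<Longrightarrow> (flag_adj s a)\<^sup>*\<^sup>* b c"
  using map unfolding is_map_iff by blast

lemma no_loop:
  assumes "b \<in> B"
  shows "a b \<notin> cyc s b"
proof -
  have "\<forall>b\<in>B. a b \<notin> cyc s b" using loopless_iff[OF permutation_s, of B a] a_a loopless by simp
  then show ?thesis using assms by simp
qed

lemma s_neq_a: "b \<in> B \<Longrightarrow> s b \<noteq> a b"
  using no_loop[of b] cyc_step[OF cyc_self[of b s]] by auto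

lemma flag_adj_in:
  assumes "y \<in> B" "flag_adj s a y z"
  shows "z \<in> B"
proof (rule ccontr)
  assume "z \<notin> B"
  then show False using assms s_in a_in s_out a_out unfolding flag_adj_def by auto
qed

definition rest :: "nat set" where
  "rest = B - {r, a r}"

text \<open>Removing \<open>r\<close> and \<open>a r\<close> from their vertex cycles: at most one step is skipped, since
  looplessness puts \<open>r\<close> and \<open>a r\<close> on different vertices.\<close>

definition del_sigma :: "nat \<Rightarrow> nat" where
  "del_sigma x = (if x \<in> rest then (if s x \<in> {r, a r} then s (s x) else s x) else x)"

abbreviation del_alpha :: "nat \<Rightarrow> nat" where
  "del_alpha \<equiv> perm_restrict a rest"

lemma root_ends: "a r \<in> B" "a r \<noteq> r" "a (a r) = r" "{a r, a (a r)} = {r, a r}"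
  using a_in[OF root] a_neq[OF root] a_a[OF root] by auto

lemma rest_subset: "rest \<subseteq> B"
  unfolding rest_def by auto

lemma card_rest: "card B = card rest + 2"
proof -
  have sub: "{r, a r} \<subseteq> B" and two: "card {r, a r} = 2" using root root_ends by auto
  have "card rest = card B - card {r, a r}"
    unfolding rest_def using card_Diff_subset[OF _ sub] by simp
  moreover have "card {r, a r} \<le> card B" using card_mono[OF finite sub] .
  ultimately show ?thesis using two by simp
qed

lemma in_rest_iff: "x \<in> rest \<longleftrightarrow> x \<in> B \<and> x \<noteq> r \<and> x \<noteq> a r"
  unfolding rest_def by auto

lemma s_end_in_rest:
  assumes "e \<in> {r, a r}" "s e \<noteq> e"
  shows "s e \<in> rest"
proof -
  have "e \<in> B" "{e, a e} = {r, a r}" using assms(1) root root_ends by auto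
  then show ?thesis
    using assms(2) s_in[of e] s_neq_a[of e] unfolding rest_def by auto
qed

lemma del_sigma_in_rest: "x \<in> rest \<Longrightarrow> del_sigma x \<in> rest"
proof -
  assume x: "x \<in> rest"
  show "del_sigma x \<in> rest"
  proof (cases "s x \<in> {r, a r}")
    case True
    have "s (s x) \<noteq> s x"
    proof
      assume "s (s x) = s x"
      then have "s x = x" by (rule s_inj)
      then show False using x True unfolding rest_def by auto
    qed
    then show ?thesis using x True s_end_in_rest[OF True] unfolding del_sigma_def by simp
  next
    case False
    then show ?thesis using x s_in unfolding del_sigma_def rest_def by auto
  qed
qed

lemma del_sigma_inj:
  assumes "x \<in> rest" "y \<in> rest" "del_sigma x = del_sigma y"
  shows "x = y"
proof -
  have "s x = s y"
  proof (cases "s x \<in> {r, a r}"; cases "s y \<in> {r, a r}")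
    assume "s x \<in> {r, a r}" "s y \<in> {r, a r}"
    then show ?thesis using assms s_inj unfolding del_sigma_def by simp
  next
    assume "s x \<in> {r, a r}" "s y \<notin> {r, a r}"
    then have "s x = y" using assms s_inj unfolding del_sigma_def by simp
    then show ?thesis using \<open>s x \<in> {r, a r}\<close> assms(2) unfolding in_rest_iff by auto
  next
    assume "s x \<notin> {r, a r}" "s y \<in> {r, a r}"
    then have "s y = x" using assms s_inj unfolding del_sigma_def by simp
    then show ?thesis using \<open>s y \<in> {r, a r}\<close> assms(1) unfolding in_rest_iff by auto
  next
    assume "s x \<notin> {r, a r}" "s y \<notin> {r, a r}"
    then show ?thesis using assms unfolding del_sigma_def by simp
  qed
  then show ?thesis by (rule s_inj)
qed

lemma del_sigma_in_cyc: "del_sigma x \<in> cyc s x"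
  using cyc_step[OF cyc_step[OF cyc_self]] cyc_step[OF cyc_self] cyc_self
  unfolding del_sigma_def by auto

lemma del_alpha_in_rest:
  assumes "x \<in> rest"
  shows "del_alpha x \<in> rest"
proof -
  have x: "x \<in> B" "x \<noteq> r" "x \<noteq> a r" using assms unfolding in_rest_iff by auto
  have "a x \<noteq> r" using a_a[OF x(1)] x(3) by auto
  moreover have "a x \<noteq> a r" using a_inj x(2) by blast
  ultimately show ?thesis using assms a_in[OF x(1)] unfolding perm_restrict_def in_rest_iff by simp
qed

lemma flag_adj_del_in_rest:
  assumes "x \<in> rest" "flag_adj del_sigma del_alpha x y"
  shows "y \<in> rest"
proof (rule ccontr)
  assume "y \<notin> rest"
  then have "del_sigma y = y" "del_alpha y = y" unfolding del_sigma_def perm_restrict_def by simp_all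
  then show False
    using assms \<open>y \<notin> rest\<close> del_sigma_in_rest[OF assms(1)] del_alpha_in_rest[OF assms(1)]
    unfolding flag_adj_def by auto
qed

lemma flag_adj_del:
  assumes "y \<in> rest" "z \<in> rest" "flag_adj s a y z"
  shows "flag_adj del_sigma del_alpha y z"
proof -
  have "z \<notin> {r, a r}" "y \<notin> {r, a r}" using assms(1,2) unfolding rest_def by auto
  then show ?thesis using assms unfolding flag_adj_def del_sigma_def perm_restrict_def by auto
qed

definition component :: "nat \<Rightarrow> nat set" where
  "component x0 = {x. (flag_adj del_sigma del_alpha)\<^sup>*\<^sup>* x0 x}"

lemma component_self: "x0 \<in> component x0"
  unfolding component_def by simp

lemma component_subset: "x0 \<in> rest \<Longrightarrow> component x0 \<subseteq> rest"
  unfolding component_def by (auto elim: rtranclp_induct intro: flag_adj_del_in_rest)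

lemma component_closed:
  "x \<in> component x0 \<Longrightarrow> flag_adj del_sigma del_alpha x y \<Longrightarrow> y \<in> component x0"
  unfolding component_def by (simp add: rtranclp.rtrancl_into_rtrancl)

lemma component_connected:
  assumes "x \<in> component x0" "y \<in> component x0"
  shows "(flag_adj del_sigma del_alpha)\<^sup>*\<^sup>* x y"
proof -
  have "(flag_adj del_sigma del_alpha)\<^sup>*\<^sup>* x x0" "(flag_adj del_sigma del_alpha)\<^sup>*\<^sup>* x0 y"
    using assms flag_adj_rtranclp_sym unfolding component_def by simp_all
  then show ?thesis by (rule rtranclp_trans)
qed

lemma component_eq:
  assumes "x \<in> component x0"
  shows "component x = component x0"
proof -
  have "(flag_adj del_sigma del_alpha)\<^sup>*\<^sup>* x0 x" "(flag_adj del_sigma del_alpha)\<^sup>*\<^sup>* x x0"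
    using component_connected[OF component_self assms] component_connected[OF assms component_self] .
  then show ?thesis unfolding component_def by (blast intro: rtranclp_trans)
qed

text \<open>The part of the deleted map hanging at the end \<open>e\<close> of the root edge; it is empty when \<open>e\<close>
  was the only flag of its vertex.\<close>

definition side :: "nat \<Rightarrow> nat set" where
  "side e = (if s e = e then {} else component (s e))"

lemma side_cases:
  "side e = {} \<and> s e = e \<or> s e \<noteq> e \<and> side e = component (s e) \<and> s e \<in> side e"
  unfolding side_def using component_self by auto

lemma side_subset: "e \<in> {r, a r} \<Longrightarrow> side e \<subseteq> rest"
  using component_subset s_end_in_rest unfolding side_def by auto

lemma side_closed: "x \<in> side e \<Longrightarrow> flag_adj del_sigma del_alpha x y \<Longrightarrow> y \<in> side e"
  using component_closed unfolding side_def by (simp split: if_splits)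

lemma adjacent_to_end_in_side:
  assumes "y \<in> rest" "e \<in> {r, a r}" "flag_adj s a y e"
  shows "y \<in> side e"
proof -
  have y: "y \<in> B" "y \<noteq> r" "y \<noteq> a r" using assms(1) unfolding in_rest_iff by auto
  consider "e = s y" | "y = s e" | "e = a y" | "y = a e" using assms(3) unfolding flag_adj_def by auto
  then show ?thesis
  proof cases
    case 1
    have "s e \<noteq> e"
    proof
      assume "s e = e"
      then have "s y = s e" using 1 by simp
      then have "y = e" by (rule s_inj)
      then show False using y assms(2) by auto
    qed
    moreover have "del_sigma y = s e" using 1 assms(1,2) unfolding del_sigma_def by simp
    moreover have "flag_adj del_sigma del_alpha (s e) y" unfolding flag_adj_def using calculation by simp
    ultimately show ?thesis using component_closed[OF component_self] unfolding side_def by simp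
  next
    case 2
    then show ?thesis using y assms(2) component_self unfolding side_def by auto
  next
    case 3
    then have "y = a e" using a_a[OF y(1)] by simp
    then show ?thesis using y assms(2) root_ends by auto
  next
    case 4
    then show ?thesis using y assms(2) root_ends by auto
  qed
qed

lemma rest_eq_sides: "rest = side r \<union> side (a r)"
proof
  show "side r \<union> side (a r) \<subseteq> rest" using side_subset by auto
  have "x \<in> {r, a r} \<or> x \<in> side r \<union> side (a r)" if "(flag_adj s a)\<^sup>*\<^sup>* x r" "x \<in> B" for x
    using that
  proof (induction rule: converse_rtranclp_induct)
    case (step y z)
    show ?case
    proof (cases "y \<in> {r, a r}")
      case False
      then have y: "y \<in> rest" using step.prems unfolding rest_def by simp
      show ?thesis
      proof (cases "z \<in> {r, a r}")
        case True
        then show ?thesis using adjacent_to_end_in_side[OF y _ step.hyps(1)] by blast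
      next
        case False
        then have "z \<in> rest" "z \<in> side r \<union> side (a r)"
          using step flag_adj_in unfolding rest_def by auto
        then show ?thesis
          using side_closed flag_adj_sym[OF flag_adj_del[OF y _ step.hyps(1)]] by blast
      qed
    qed simp
  qed simp
  then show "rest \<subseteq> side r \<union> side (a r)" using connected root unfolding rest_def by blast
qed

lemma side_sigma:
  assumes e: "e \<in> {r, a r}" and disj: "side r \<inter> side (a r) = {}" and x: "x \<in> side e"
  shows "s x = e \<and> del_sigma x = s e \<or> s x \<noteq> e \<and> s x \<in> side e \<and> del_sigma x = s x \<and> s x \<noteq> s e"
proof -
  have xr: "x \<in> rest" using side_subset[OF e] x by blast
  have in_side: "del_sigma x \<in> side e"
    using side_closed[OF x] unfolding flag_adj_def by simp
  show ?thesis
  proof (cases "s x \<in> {r, a r}")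
    case True
    have "s x = e"
    proof (rule ccontr)
      assume "s x \<noteq> e"
      have "s (s x) \<noteq> s x"
      proof
        assume "s (s x) = s x"
        then have "s x = x" by (rule s_inj)
        then show False using True xr unfolding in_rest_iff by auto
      qed
      then have "s (s x) \<in> side (s x)" using side_cases[of "s x"] by auto
      then show False using in_side disj e xr True \<open>s x \<noteq> e\<close> unfolding del_sigma_def by auto
    qed
    then show ?thesis using xr e unfolding del_sigma_def by auto
  next
    case False
    have "s x \<noteq> s e"
    proof
      assume "s x = s e"
      then have "x = e" by (rule s_inj)
      then show False using xr e unfolding in_rest_iff by auto
    qed
    then show ?thesis using False xr in_side e unfolding del_sigma_def by auto
  qed
qed

lemma card_rest_less: "card rest < card B"
  using card_rest by simp

lemma component_connected_restricted:
  assumes "x0 \<in> rest" "b \<in> component x0" "c \<in> component x0"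
  shows "(flag_adj (perm_restrict del_sigma (component x0)) (perm_restrict a (component x0)))\<^sup>*\<^sup>* b c"
proof -
  have "(flag_adj del_sigma del_alpha)\<^sup>*\<^sup>* b c" using component_connected assms(2,3) .
  then show ?thesis using assms(2)
  proof (induction rule: rtranclp_induct)
    case (step y z)
    have "component b = component x0" using component_eq step.prems by simp
    then have "y \<in> component x0" "z \<in> component x0"
      using step.hyps component_closed unfolding component_def by auto
    then have "flag_adj (perm_restrict del_sigma (component x0)) (perm_restrict a (component x0)) y z"
      using step.hyps(2) component_subset[OF assms(1)] unfolding flag_adj_def perm_restrict_def by auto
    with step.IH[OF step.prems] show ?case by (rule rtranclp.rtrancl_into_rtrancl)
  qed simp
qed

lemma component_rooted_loopless_map:
  assumes "x0 \<in> rest"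
  defines "K \<equiv> component x0"
  shows "rooted_loopless_map K (perm_restrict del_sigma K) (perm_restrict a K) x0"
proof
  let ?s = "perm_restrict del_sigma K" and ?a = "perm_restrict a K"
  have K: "K \<subseteq> rest" "finite K" using component_subset[OF assms(1)] finite rest_subset
    unfolding K_def by (auto intro: finite_subset)
  have closed: "del_sigma x \<in> K" "a x \<in> K" if "x \<in> K" for x
    using component_closed[of x x0] that K(1) unfolding K_def flag_adj_def perm_restrict_def by auto
  have "?s permutes K"
    using permutes_perm_restrict[OF K(2)] closed del_sigma_inj K(1) unfolding inj_on_def by blast
  moreover have "?a permutes K"
    using permutes_perm_restrict[OF K(2)] closed a_inj unfolding inj_on_def by blast
  moreover have invol: "?a b \<noteq> b \<and> ?a (?a b) = b" if "b \<in> K" for b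
    using closed[OF that] that a_neq a_a K(1) rest_subset unfolding perm_restrict_def by auto
  moreover have "(flag_adj ?s ?a)\<^sup>*\<^sup>* b c" if "b \<in> K" "c \<in> K" for b c
    using component_connected_restricted[OF assms(1)] that unfolding K_def .
  ultimately show "is_map K ?s ?a" unfolding is_map_iff using K(2) by blast
  have "cyc ?s b \<subseteq> cyc s b" for b
    by (rule cyc_subset) (metis cyc_trans del_sigma_in_cyc perm_restrict_def)
  moreover have "a b \<notin> cyc s b" if "b \<in> K" for b using no_loop that K(1) rest_subset by auto
  ultimately show "loopless K ?s ?a"
    using loopless_iff[OF permutes_imp_permutation[OF K(2) \<open>?s permutes K\<close>], of K ?a] invol
    unfolding perm_restrict_def by auto
  show "x0 \<in> K" unfolding K_def by (rule component_self)
qed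

end

section \<open>Encoding a rooted loopless map by a word\<close>

definition encodes :: "nat set \<Rightarrow> (nat \<Rightarrow> nat) \<Rightarrow> (nat \<Rightarrow> nat) \<Rightarrow> nat list \<Rightarrow> (nat \<Rightarrow> nat) \<Rightarrow> bool" where
  "encodes B s a w f \<longleftrightarrow> bij_betw f B {0..<length w} \<and>
     (\<forall>b\<in>B. f (s b) = word_sigma w (f b) \<and> f (a b) = word_alpha w (f b))"

lemma encodesI:
  assumes "inj_on f B" "\<And>b. b \<in> B \<Longrightarrow> f b < length w" "card B = length w"
    and "\<And>b. b \<in> B \<Longrightarrow> f (s b) = word_sigma w (f b) \<and> f (a b) = word_alpha w (f b)"
  shows "encodes B s a w f"
proof -
  have "f ` B \<subseteq> {0..<length w}" using assms(2) by auto
  moreover have "card (f ` B) = card {0..<length w}" using card_image[OF assms(1)] assms(3) by simp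
  ultimately have "f ` B = {0..<length w}" using card_subset_eq by blast
  then show ?thesis using assms(1,4) unfolding encodes_def bij_betw_def by simp
qed

lemma encodes_less: "encodes B s a w f \<Longrightarrow> b \<in> B \<Longrightarrow> f b < length w"
  unfolding encodes_def bij_betw_def by auto

lemma encodes_card: "encodes B s a w f \<Longrightarrow> card B = length w"
  unfolding encodes_def by (metis bij_betw_same_card card_atLeastLessThan diff_zero)

lemma encodes_inj: "encodes B s a w f \<Longrightarrow> x \<in> B \<Longrightarrow> y \<in> B \<Longrightarrow> f x = f y \<Longrightarrow> x = y"
  unfolding encodes_def bij_betw_def inj_on_def by blast

lemma encodes_perm_restrict:
  assumes "encodes K (perm_restrict t K) (perm_restrict u K) w f" "x \<in> K"
  shows "f (t x) = word_sigma w (f x)" "f (u x) = word_alpha w (f x)"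
  using assms unfolding encodes_def perm_restrict_def by auto

context rooted_loopless_map
begin

lemma a_in_side:
  assumes "e \<in> {r, a r}" "x \<in> side e"
  shows "a x \<in> side e"
proof -
  have "x \<in> rest" using side_subset[OF assms(1)] assms(2) by blast
  then have "flag_adj del_sigma del_alpha x (a x)" unfolding flag_adj_def perm_restrict_def by simp
  then show ?thesis using side_closed[OF assms(2)] by blast
qed

lemma side_nonempty_length:
  assumes "e \<in> {r, a r}" "encodes (side e) t u v f" "side e \<noteq> {}"
  shows "length v \<noteq> 0"
  using encodes_card[OF assms(2)] assms(3) side_subset[OF assms(1)] rest_subset finite
  by (metis card_0_eq finite_subset)

lemma sides_overlap:
  assumes "side r \<inter> side (a r) \<noteq> {}"
  shows "s r \<noteq> r" "s (a r) \<noteq> a r" "side r = rest" "side (a r) = rest"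
proof -
  obtain x where x: "x \<in> side r" "x \<in> side (a r)" using assms by blast
  then show "s r \<noteq> r" "s (a r) \<noteq> a r" unfolding side_def by (auto split: if_splits)
  then have "side r = component (s r)" "side (a r) = component (s (a r))" unfolding side_def by simp_all
  then have "side r = component x" "side (a r) = component x"
    using x component_eq[of x "s r"] component_eq[of x "s (a r)"] by simp_all
  then show "side r = rest" "side (a r) = rest" using rest_eq_sides by auto
qed

end

text \<open>A bridge: the two sides are encoded separately by \<open>Y\<close> (at \<open>r\<close>) and \<open>X\<close> (at \<open>a r\<close>), and
  the root edge becomes a sink letter enclosing \<open>X\<close>.\<close>

locale bridge_root = rooted_loopless_map +
  fixes X Y :: "nat list" and fX fY :: "nat \<Rightarrow> nat"
  assumes disjoint: "side r \<inter> side (a r) = {}"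
    and X: "sink_dominated X"
      "encodes (side (a r)) (perm_restrict del_sigma (side (a r))) (perm_restrict a (side (a r))) X fX"
      "side (a r) \<noteq> {} \<Longrightarrow> fX (s (a r)) = 0"
    and Y: "sink_dominated Y"
      "encodes (side r) (perm_restrict del_sigma (side r)) (perm_restrict a (side r)) Y fY"
      "side r \<noteq> {} \<Longrightarrow> fY (s r) = 0"
begin

definition glue :: "nat \<Rightarrow> nat" where
  "glue x = (if x = r then 0 else if x = a r then Suc (length X)
     else if x \<in> side (a r) then Suc (fX x) else length X + 2 + fY x)"

abbreviation "w \<equiv> bridge_word X Y"

lemma flag_cases:
  assumes "x \<in> B"
  obtains "x = r" | "x = a r" | "x \<in> side (a r)" | "x \<in> side r"
  using assms rest_eq_sides unfolding rest_def by blast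

lemma side_not_ends:
  assumes "e \<in> {r, a r}" "x \<in> side e"
  shows "x \<in> B" "x \<noteq> r" "x \<noteq> a r"
proof -
  have "x \<in> rest" using side_subset[OF assms(1)] assms(2) by blast
  then show "x \<in> B" "x \<noteq> r" "x \<noteq> a r" unfolding in_rest_iff by simp_all
qed

lemma glue_ends: "glue r = 0" "glue (a r) = Suc (length X)"
  unfolding glue_def using root_ends by auto

lemma glue_coroot_side_eq: "x \<in> side (a r) \<Longrightarrow> glue x = Suc (fX x)"
  using side_not_ends(2,3)[of "a r" x] unfolding glue_def by simp

lemma glue_root_side_eq: "x \<in> side r \<Longrightarrow> glue x = length X + 2 + fY x"
  using side_not_ends(2,3)[of r x] disjoint unfolding glue_def by auto

lemma card_B: "card B = length X + length Y + 2"
proof -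
  have "card rest = length X + length Y"
    using rest_eq_sides card_Un_disjoint[of "side r" "side (a r)"] disjoint encodes_card[OF X(2)]
      encodes_card[OF Y(2)] finite rest_subset by (metis add.commute finite_Un finite_subset)
  then show ?thesis using card_rest by simp
qed

lemma glue_cases:
  assumes "x \<in> B"
  shows "x = r \<and> glue x = 0 \<or> x = a r \<and> glue x = Suc (length X) \<or>
    x \<in> side (a r) \<and> glue x = Suc (fX x) \<and> fX x < length X \<or>
    x \<in> side r \<and> glue x = length X + 2 + fY x \<and> fY x < length Y"
  using encodes_less[OF X(2)] encodes_less[OF Y(2)] glue_coroot_side_eq glue_root_side_eq
  unfolding glue_def by (cases rule: flag_cases[OF assms]) auto

lemma glue_inj: "inj_on glue B"
proof (rule inj_onI)
  fix x y assume "x \<in> B" "y \<in> B" "glue x = glue y"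
  with glue_cases[OF \<open>x \<in> B\<close>] glue_cases[OF \<open>y \<in> B\<close>] show "x = y"
    using encodes_inj[OF X(2), of x y] encodes_inj[OF Y(2), of x y] by auto
qed

lemma glue_less: "x \<in> B \<Longrightarrow> glue x < length w"
  using glue_cases bridge_word_spec(2)[OF X(1) Y(1)] by fastforce

lemma glue_root:
  "glue (s r) = word_sigma w (glue r)" "glue (a r) = word_alpha w (glue r)"
  "glue (s (a r)) = word_sigma w (glue (a r))" "glue (a (a r)) = word_alpha w (glue (a r))"
proof -
  note glue_ends
  moreover have "glue (s r) = (if length Y = 0 then 0 else Suc (Suc (length X)))"
  proof (cases "side r = {}")
    case True
    then show ?thesis using side_cases[of r] encodes_card[OF Y(2)] \<open>glue r = 0\<close> by simp
  next
    case False
    then show ?thesis using side_cases[of r] Y(3) glue_root_side_eq side_nonempty_length[OF _ Y(2)] by auto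
  qed
  moreover have "glue (s (a r)) = 1"
  proof (cases "side (a r) = {}")
    case True
    then show ?thesis using side_cases[of "a r"] encodes_card[OF X(2)] \<open>glue (a r) = _\<close> by simp
  next
    case False
    then show ?thesis using side_cases[of "a r"] X(3) glue_coroot_side_eq by auto
  qed
  ultimately show "glue (s r) = word_sigma w (glue r)" "glue (a r) = word_alpha w (glue r)"
    "glue (s (a r)) = word_sigma w (glue (a r))" "glue (a (a r)) = word_alpha w (glue (a r))"
    using bridge_word_spec(3-6)[OF X(1) Y(1)] root_ends(3) by simp_all
qed

lemma glue_coroot_side:
  assumes x: "x \<in> side (a r)"
  shows "glue (s x) = word_sigma w (glue x)" "glue (a x) = word_alpha w (glue x)"
proof -
  have e: "a r \<in> {r, a r}" by simp
  have j: "fX x < length X" "glue x = Suc (fX x)"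
    using encodes_less[OF X(2) x] glue_coroot_side_eq[OF x] by simp_all
  have root: "s (a r) \<in> side (a r)" "fX (s (a r)) = 0" using x side_cases[of "a r"] X(3) by auto
  have "glue (s x) = (if word_sigma X (fX x) = 0 then Suc (length X) else Suc (word_sigma X (fX x)))"
    using side_sigma[OF e disjoint x]
  proof (elim disjE conjE)
    assume "s x = a r" "del_sigma x = s (a r)"
    then show ?thesis using encodes_perm_restrict(1)[OF X(2) x] root glue_ends by simp
  next
    assume "s x \<noteq> a r" "s x \<in> side (a r)" "del_sigma x = s x" "s x \<noteq> s (a r)"
    moreover have "fX (s x) \<noteq> 0" using encodes_inj[OF X(2) \<open>s x \<in> side (a r)\<close> root(1)] root(2) calculation
      by auto
    ultimately show ?thesis
      using encodes_perm_restrict(1)[OF X(2) x] glue_coroot_side_eq by simp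
  qed
  then show "glue (s x) = word_sigma w (glue x)" using bridge_word_spec(8)[OF X(1) Y(1) j(1)] j(2) by simp
  show "glue (a x) = word_alpha w (glue x)"
    using bridge_word_spec(7)[OF X(1) Y(1) j(1)] j(2) encodes_perm_restrict(2)[OF X(2) x]
      glue_coroot_side_eq[OF a_in_side[OF e x]] by simp
qed

lemma glue_root_side:
  assumes x: "x \<in> side r"
  shows "glue (s x) = word_sigma w (glue x)" "glue (a x) = word_alpha w (glue x)"
proof -
  have e: "r \<in> {r, a r}" by simp
  have j: "fY x < length Y" "glue x = length X + 2 + fY x"
    using encodes_less[OF Y(2) x] glue_root_side_eq[OF x] by simp_all
  have root: "s r \<in> side r" "fY (s r) = 0" using x side_cases[of r] Y(3) by auto
  have "glue (s x) = (if word_sigma Y (fY x) = 0 then 0 else length X + 2 + word_sigma Y (fY x))"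
    using side_sigma[OF e disjoint x]
  proof (elim disjE conjE)
    assume "s x = r" "del_sigma x = s r"
    then show ?thesis using encodes_perm_restrict(1)[OF Y(2) x] root glue_ends by simp
  next
    assume "s x \<noteq> r" "s x \<in> side r" "del_sigma x = s x" "s x \<noteq> s r"
    moreover have "fY (s x) \<noteq> 0" using encodes_inj[OF Y(2) \<open>s x \<in> side r\<close> root(1)] root(2) calculation
      by auto
    ultimately show ?thesis
      using encodes_perm_restrict(1)[OF Y(2) x] glue_root_side_eq by simp
  qed
  then show "glue (s x) = word_sigma w (glue x)" using bridge_word_spec(10)[OF X(1) Y(1) j(1)] j(2) by simp
  show "glue (a x) = word_alpha w (glue x)"
    using bridge_word_spec(9)[OF X(1) Y(1) j(1)] j(2) encodes_perm_restrict(2)[OF Y(2) x]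
      glue_root_side_eq[OF a_in_side[OF e x]] by simp
qed

theorem encodes_glue: "encodes B s a w glue"
  using glue_inj glue_less card_B bridge_word_spec(2)[OF X(1) Y(1)] glue_root glue_coroot_side glue_root_side
  by (intro encodesI) (auto elim: flag_cases)

end

text \<open>Not a bridge: the rest of the map is connected and encoded by \<open>v\<close> with \<open>s r\<close> at \<open>0\<close>; the
  root edge becomes a letter opening at \<open>0\<close> and closing just before the position \<open>k\<close> of \<open>s (a r)\<close>.\<close>

locale nonbridge_root = rooted_loopless_map +
  fixes v :: "nat list" and g :: "nat \<Rightarrow> nat"
  assumes ends_moved: "s r \<noteq> r" "s (a r) \<noteq> a r"
    and v: "sink_dominated v" "encodes rest (perm_restrict del_sigma rest) (perm_restrict a rest) v g"
      "g (s r) = 0"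
begin

definition k :: nat where
  "k = g (s (a r))"

definition glue :: "nat \<Rightarrow> nat" where
  "glue x = (if x = r then 0 else if x = a r then Suc k else chord_shift k (g x))"

abbreviation "w \<equiv> insert_chord k v"

lemma ends_in_rest: "s r \<in> rest" "s (a r) \<in> rest"
  using s_end_in_rest ends_moved by auto

lemma k_pos: "0 < k"
proof -
  have "s (a r) \<noteq> s r" using s_inj root_ends(2) by metis
  then show ?thesis using encodes_inj[OF v(2) ends_in_rest(2,1)] v(3) unfolding k_def by auto
qed

lemma k_less: "k < length v"
  using encodes_less[OF v(2) ends_in_rest(2)] unfolding k_def .

text \<open>If \<open>k\<close> lay in the outer vertex of \<open>v\<close>, which contains \<open>0 = g (s r)\<close>, then \<open>s (a r)\<close> would
  lie on the vertex cycle of \<open>r\<close>, and the root edge would be a loop.\<close>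

lemma enclosing_sinks_k: "enclosing_sinks v k \<noteq> {}"
proof
  assume empty: "enclosing_sinks v k = {}"
  have dv: "dow v" using v(1) sink_dominated_imp_dow by blast
  have "0 < length v" using k_less by linarith
  then have "k \<in> cyc (word_sigma v) 0"
    using cyc_word_sigma[OF dv] empty enclosing_sinks_0 k_less by auto
  moreover have "g ` cyc del_sigma (s r) = cyc (word_sigma v) (g (s r))" "cyc del_sigma (s r) \<subseteq> rest"
    using image_cyc_conj[of rest del_sigma g "word_sigma v" "s r"] del_sigma_in_rest
      encodes_perm_restrict(1)[OF v(2)] ends_in_rest(1) by auto
  ultimately obtain z where "z \<in> cyc del_sigma (s r)" "g z = g (s (a r))"
    using v(3) unfolding k_def by (metis imageE)
  then have "s (a r) \<in> cyc del_sigma (s r)"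
    using encodes_inj[OF v(2)] ends_in_rest(2) \<open>cyc del_sigma (s r) \<subseteq> rest\<close> by blast
  also have "\<dots> \<subseteq> cyc s (s r)" by (rule cyc_subset) (meson cyc_trans del_sigma_in_cyc)
  also have "\<dots> = cyc s r" by (rule cyc_eq[OF permutation_s cyc_step[OF cyc_self]])
  finally have "cyc s (s (a r)) = cyc s r" by (rule cyc_eq[OF permutation_s])
  moreover have "a r \<in> cyc s (s (a r))" by (rule cyc_sym[OF permutation_s cyc_step[OF cyc_self]])
  ultimately show False using no_loop[OF root] by simp
qed

lemma glue_cases:
  assumes "x \<in> B"
  shows "x = r \<and> glue x = 0 \<or> x = a r \<and> glue x = Suc k \<or>
    x \<in> rest \<and> glue x = chord_shift k (g x) \<and> g x < length v"
  using assms encodes_less[OF v(2)] unfolding glue_def in_rest_iff by auto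

lemma glue_inj: "inj_on glue B"
proof (rule inj_onI)
  fix x y assume "x \<in> B" "y \<in> B" "glue x = glue y"
  with glue_cases[OF \<open>x \<in> B\<close>] glue_cases[OF \<open>y \<in> B\<close>] show "x = y"
    using encodes_inj[OF v(2), of x y] by (auto simp: chord_shift_def split: if_splits)
qed

lemma glue_less: "x \<in> B \<Longrightarrow> glue x < length w"
  using glue_cases length_insert_chord[of v k] chord_shift_less[of v k] k_less v(1) sink_dominated_imp_dow
  by fastforce

lemma card_B: "card B = length v + 2"
  using card_rest encodes_card[OF v(2)] by simp

lemmas word = nonbridge_word_spec[OF v(1) k_pos k_less enclosing_sinks_k]

lemma glue_rest_eq: "x \<in> rest \<Longrightarrow> glue x = chord_shift k (g x)"
  unfolding glue_def in_rest_iff by simp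

lemma glue_ends: "glue r = 0" "glue (a r) = Suc k"
  unfolding glue_def using root_ends by auto

lemma glue_root:
  "glue (s r) = word_sigma w (glue r)" "glue (a r) = word_alpha w (glue r)"
  "glue (s (a r)) = word_sigma w (glue (a r))" "glue (a (a r)) = word_alpha w (glue (a r))"
proof -
  note glue_ends
  moreover have "glue (s r) = 1" "glue (s (a r)) = Suc (Suc k)"
    using glue_rest_eq ends_in_rest v(3) k_pos unfolding k_def chord_shift_def by auto
  ultimately show "glue (s r) = word_sigma w (glue r)" "glue (a r) = word_alpha w (glue r)"
    "glue (s (a r)) = word_sigma w (glue (a r))" "glue (a (a r)) = word_alpha w (glue (a r))"
    using word(3-6) root_ends(3) by simp_all
qed

lemma glue_rest:
  assumes x: "x \<in> rest"
  shows "glue (s x) = word_sigma w (glue x)" "glue (a x) = word_alpha w (glue x)"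
proof -
  have j: "g x < length v" "glue x = chord_shift k (g x)" using encodes_less[OF v(2) x] glue_rest_eq[OF x] .
  have x': "x \<noteq> r" "x \<noteq> a r" using x unfolding in_rest_iff by auto
  have sigma: "g (del_sigma x) = word_sigma v (g x)" using encodes_perm_restrict(1)[OF v(2) x] .
  have "glue (s x) = (if word_sigma v (g x) = 0 then 0 else if word_sigma v (g x) = k then Suc k
      else chord_shift k (word_sigma v (g x)))"
  proof (cases "s x \<in> {r, a r}")
    case True
    then show ?thesis
      using sigma x k_pos v(3) unfolding del_sigma_def k_def glue_def by (auto simp: root_ends(2))
  next
    case False
    then have sx: "s x \<in> rest" "del_sigma x = s x" using del_sigma_in_rest[OF x] x unfolding del_sigma_def by auto
    have "s x \<noteq> s r" "s x \<noteq> s (a r)" using x' s_inj by blast+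
    then have "g (s x) \<noteq> 0" "g (s x) \<noteq> k"
      using encodes_inj[OF v(2) sx(1)] ends_in_rest v(3) unfolding k_def by metis+
    then show ?thesis using sigma sx glue_rest_eq by simp
  qed
  then show "glue (s x) = word_sigma w (glue x)" using word(8)[OF j(1)] j(2) by simp
  have "a x \<in> rest" "g (a x) = word_alpha v (g x)"
    using del_alpha_in_rest[OF x] encodes_perm_restrict(2)[OF v(2) x] x unfolding perm_restrict_def by auto
  then show "glue (a x) = word_alpha w (glue x)" using word(7)[OF j(1)] j(2) glue_rest_eq by simp
qed

theorem encodes_glue: "encodes B s a w glue"
proof (rule encodesI)
  show "card B = length w"
    using card_B length_insert_chord[of v k] k_less v(1) sink_dominated_imp_dow by simp
  show "glue (s b) = word_sigma w (glue b) \<and> glue (a b) = word_alpha w (glue b)" if "b \<in> B" for b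
    using that glue_root glue_rest unfolding in_rest_iff by (cases "b = r"; cases "b = a r") auto
qed (use glue_inj glue_less in auto)

end

lemma sink_dominated_Nil: "sink_dominated []"
  unfolding sink_dominated_def dow_def dominating_def sinks_def by simp

lemma encodes_empty: "encodes {} s a [] f"
  unfolding encodes_def bij_betw_def by simp

definition rooted_encodable :: "nat set \<Rightarrow> (nat \<Rightarrow> nat) \<Rightarrow> (nat \<Rightarrow> nat) \<Rightarrow> nat \<Rightarrow> bool" where
  "rooted_encodable B s a r \<longleftrightarrow> (\<exists>w f. sink_dominated w \<and> encodes B s a w f \<and> f r = 0)"

lemma (in rooted_loopless_map) rooted_encodable_if_sides:
  assumes "\<And>e. e \<in> {r, a r} \<Longrightarrow> s e \<noteq> e \<Longrightarrow>
    rooted_encodable (side e) (perm_restrict del_sigma (side e)) (perm_restrict a (side e)) (s e)"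
  shows "rooted_encodable B s a r"
proof -
  have side: "\<exists>X f. sink_dominated X \<and>
      encodes (side e) (perm_restrict del_sigma (side e)) (perm_restrict a (side e)) X f \<and>
      (side e \<noteq> {} \<longrightarrow> f (s e) = 0)" if e: "e \<in> {r, a r}" for e
  proof (cases "s e = e")
    case True
    then have "side e = {}" using side_cases by auto
    then show ?thesis
      by (intro exI[of _ "[]"] exI[of _ id]) (simp add: sink_dominated_Nil encodes_empty)
  next
    case False
    then show ?thesis using assms[OF e False] side_cases[of e] unfolding rooted_encodable_def by auto
  qed
  show ?thesis
  proof (cases "side r \<inter> side (a r) = {}")
    case True
    obtain X fX Y fY where
      "sink_dominated X" "encodes (side (a r)) (perm_restrict del_sigma (side (a r))) (perm_restrict a (side (a r))) X fX"
      "side (a r) \<noteq> {} \<Longrightarrow> fX (s (a r)) = 0"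
      "sink_dominated Y" "encodes (side r) (perm_restrict del_sigma (side r)) (perm_restrict a (side r)) Y fY"
      "side r \<noteq> {} \<Longrightarrow> fY (s r) = 0"
      using side[of r] side[of "a r"] by auto
    then interpret bridge_root B s a r X Y fX fY using True by unfold_locales
    show ?thesis using encodes_glue bridge_word_spec(1)[OF X(1) Y(1)] glue_ends(1)
      unfolding rooted_encodable_def by blast
  next
    case False
    note overlap = sides_overlap[OF False]
    obtain v g where "sink_dominated v" "encodes rest (perm_restrict del_sigma rest) (perm_restrict a rest) v g"
      "g (s r) = 0"
      using side[of r] overlap side_cases[of r] by auto
    then interpret nonbridge_root B s a r v g using overlap by unfold_locales
    show ?thesis using encodes_glue word(1) glue_ends(1) unfolding rooted_encodable_def by blast
  qed
qed

theorem rooted_loopless_map_encodable: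
  "rooted_loopless_map B s a r \<Longrightarrow> rooted_encodable B s a r"
proof (induction "card B" arbitrary: B s a r rule: less_induct)
  case less
  interpret rooted_loopless_map B s a r by (rule less.prems)
  show ?case
  proof (rule rooted_encodable_if_sides)
    fix e assume e: "e \<in> {r, a r}" "s e \<noteq> e"
    then have "s e \<in> rest" "side e = component (s e)" using s_end_in_rest unfolding side_def by auto
    moreover have "card (component (s e)) < card B"
      using card_mono[OF finite_subset[OF rest_subset finite] component_subset[OF \<open>s e \<in> rest\<close>]]
        card_rest_less by simp
    ultimately show "rooted_encodable (side e) (perm_restrict del_sigma (side e)) (perm_restrict a (side e)) (s e)"
      using less.hyps component_rooted_loopless_map by metis
  qed
qed

lemma rmap_iso_refl: "(x, x) \<in> rmap_iso"
  by (cases x) (auto simp: rmap_iso_def intro!: exI[of _ id])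

lemma rmap_iso_trans:
  assumes "(x, y) \<in> rmap_iso" "(y, z) \<in> rmap_iso"
  shows "(x, z) \<in> rmap_iso"
proof -
  obtain B s a r B' s' a' r' B'' s'' a'' r'' where xyz: "x = (B, s, a, r)" "y = (B', s', a', r')"
    "z = (B'', s'', a'', r'')" by (metis prod_cases4)
  obtain \<phi> where \<phi>: "bij_betw \<phi> B B'" "\<forall>b\<in>B. \<phi> (s b) = s' (\<phi> b) \<and> \<phi> (a b) = a' (\<phi> b)" "\<phi> r = r'"
    using assms(1) unfolding xyz rmap_iso_def by auto
  obtain \<psi> where \<psi>: "bij_betw \<psi> B' B''" "\<forall>b\<in>B'. \<psi> (s' b) = s'' (\<psi> b) \<and> \<psi> (a' b) = a'' (\<psi> b)" "\<psi> r' = r''"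
    using assms(2) unfolding xyz rmap_iso_def by auto
  have "bij_betw (\<psi> \<circ> \<phi>) B B''" using \<phi>(1) \<psi>(1) by (rule bij_betw_trans)
  moreover have "\<forall>b\<in>B. (\<psi> \<circ> \<phi>) (s b) = s'' ((\<psi> \<circ> \<phi>) b) \<and> (\<psi> \<circ> \<phi>) (a b) = a'' ((\<psi> \<circ> \<phi>) b)"
    using \<phi>(2) \<psi>(2) bij_betwE[OF \<phi>(1)] by auto
  ultimately show ?thesis using \<phi>(3) \<psi>(3) unfolding xyz rmap_iso_def by auto
qed

lemma rmap_iso_sym:
  assumes "((B, s, a, r), y) \<in> rmap_iso" "\<And>b. b \<in> B \<Longrightarrow> s b \<in> B" "\<And>b. b \<in> B \<Longrightarrow> a b \<in> B" "r \<in> B"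
  shows "(y, (B, s, a, r)) \<in> rmap_iso"
proof -
  obtain B' s' a' r' where y: "y = (B', s', a', r')" by (cases y)
  obtain \<phi> where \<phi>: "bij_betw \<phi> B B'" "\<forall>b\<in>B. \<phi> (s b) = s' (\<phi> b) \<and> \<phi> (a b) = a' (\<phi> b)" "\<phi> r = r'"
    using assms(1) unfolding y rmap_iso_def by auto
  have "bij_betw (inv_into B \<phi>) B' B" using bij_betw_inv_into[OF \<phi>(1)] .
  moreover have "\<forall>b\<in>B'. inv_into B \<phi> (s' b) = s (inv_into B \<phi> b) \<and> inv_into B \<phi> (a' b) = a (inv_into B \<phi> b)"
    using bij_betw_inv_into_conj[OF \<phi>(1), of s s'] bij_betw_inv_into_conj[OF \<phi>(1), of a a'] \<phi>(2) assms(2,3)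
    by simp
  moreover have "inv_into B \<phi> r' = r" using bij_betw_inv_into_left[OF \<phi>(1) assms(4)] \<phi>(3) by simp
  ultimately show ?thesis unfolding y rmap_iso_def by auto
qed

lemma rmap_iso_class_eq:
  assumes "((B, s, a, r), y) \<in> rmap_iso" "\<And>b. b \<in> B \<Longrightarrow> s b \<in> B" "\<And>b. b \<in> B \<Longrightarrow> a b \<in> B" "r \<in> B"
  shows "rmap_iso `` {(B, s, a, r)} = rmap_iso `` {y}"
  using rmap_iso_trans[OF rmap_iso_sym[OF assms]] rmap_iso_trans[OF assms(1)] by blast

lemma encodes_imp_rmap_iso:
  assumes "encodes B s a w f" "f r = 0"
  shows "((B, s, a, r), word_map w) \<in> rmap_iso"
  using assms unfolding encodes_def word_map_def rmap_iso_def by auto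

lemma rooted_loopless_mapsD:
  assumes "(B, s, a, r) \<in> rooted_loopless_maps m"
  shows "rooted_loopless_map B s a r" "card B = 2 * m"
proof -
  show "rooted_loopless_map B s a r" using assms unfolding rooted_loopless_maps_def by unfold_locales auto
  then interpret rooted_loopless_map B s a r .
  show "card B = 2 * m"
    using card_map_edges[of B a] finite a_in a_neq a_a assms unfolding rooted_loopless_maps_def by auto
qed

lemma rooted_loopless_maps_iso_word_map:
  assumes "x \<in> rooted_loopless_maps m"
  obtains w where "sink_dominated w" "length w = 2 * m" "(x, word_map w) \<in> rmap_iso"
proof -
  obtain B s a r where x: "x = (B, s, a, r)" by (cases x)
  note map = rooted_loopless_mapsD[OF assms[unfolded x]]
  obtain w f where w: "sink_dominated w" "encodes B s a w f" "f r = 0"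
    using rooted_loopless_map_encodable[OF map(1)] unfolding rooted_encodable_def by blast
  have "length w = 2 * m" using encodes_card[OF w(2)] map(2) by simp
  moreover have "(x, word_map w) \<in> rmap_iso" using encodes_imp_rmap_iso[OF w(2,3)] x by simp
  ultimately show ?thesis using w(1) that by blast
qed

lemma word_map_renaming:
  assumes "(u, v) \<in> renaming_rel" "dow u"
  shows "word_map v = word_map u"
  using assms word_map_map unfolding renaming_rel_def by auto

lemma dow_classes_eq: "dow_classes m = {w. sink_dominated w \<and> length w = 2 * m} // renaming_rel"
  unfolding dow_classes_def sink_dominated_def by (simp add: conj_commute)

definition word_map_class :: "nat list set \<Rightarrow> rmap set" where
  "word_map_class C = rmap_iso `` {word_map (SOME w. w \<in> C)}"

lemma word_map_class_eq:
  assumes "sink_dominated w"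
  shows "word_map_class (renaming_rel `` {w}) = rmap_iso `` {word_map w}"
proof -
  have "(w, SOME v. v \<in> renaming_rel `` {w}) \<in> renaming_rel"
    using someI[of "\<lambda>v. v \<in> renaming_rel `` {w}" w] equiv_class_self[OF renaming_rel_equiv] by auto
  then show ?thesis
    using word_map_renaming assms sink_dominated_imp_dow unfolding word_map_class_def by metis
qed

lemma inj_on_word_map_class: "inj_on word_map_class (dow_classes m)"
proof (rule inj_onI)
  fix C D assume "C \<in> dow_classes m" "D \<in> dow_classes m" "word_map_class C = word_map_class D"
  then obtain u v where u: "sink_dominated u" "length u = 2 * m" "C = renaming_rel `` {u}"
    and v: "sink_dominated v" "length v = 2 * m" "D = renaming_rel `` {v}"
    and "rmap_iso `` {word_map u} = rmap_iso `` {word_map v}"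
    unfolding dow_classes_eq quotient_def using word_map_class_eq by auto
  then have "(word_map u, word_map v) \<in> rmap_iso" using rmap_iso_refl by blast
  then have "(u, v) \<in> renaming_rel" using renaming_rel_if_word_map_iso u v by simp
  then show "C = D" using u(3) v(3) equiv_class_eq[OF renaming_rel_equiv] by simp
qed

lemma word_map_class_image:
  assumes "1 \<le> m"
  shows "word_map_class ` dow_classes m = rooted_loopless_map_classes m"
proof
  show "word_map_class ` dow_classes m \<subseteq> rooted_loopless_map_classes m"
    using word_map_in_rooted_loopless_maps[OF _ _ assms] word_map_class_eq
    unfolding dow_classes_eq rooted_loopless_map_classes_def quotient_def by auto
  show "rooted_loopless_map_classes m \<subseteq> word_map_class ` dow_classes m"
  proof
    fix D assume "D \<in> rooted_loopless_map_classes m"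
    then obtain x where x: "x \<in> rooted_loopless_maps m" "D = rmap_iso `` {x}"
      unfolding rooted_loopless_map_classes_def quotient_def by auto
    obtain w where w: "sink_dominated w" "length w = 2 * m" "(x, word_map w) \<in> rmap_iso"
      using rooted_loopless_maps_iso_word_map[OF x(1)] .
    obtain B s a r where "x = (B, s, a, r)" by (cases x)
    then have "D = rmap_iso `` {word_map w}"
      using x rmap_iso_class_eq[of B s a r] w(3) rooted_loopless_mapsD(1)
        rooted_loopless_map.s_in rooted_loopless_map.a_in rooted_loopless_map.root by metis
    moreover have "renaming_rel `` {w} \<in> dow_classes m" unfolding dow_classes_eq quotient_def using w by auto
    ultimately show "D \<in> word_map_class ` dow_classes m" using word_map_class_eq[OF w(1)] by auto
  qed
qed

lemma card_dow_classes_0: "card (dow_classes 0) = 1"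
proof -
  have "{w. sink_dominated w \<and> length w = 2 * 0} = {[]}" using sink_dominated_Nil by auto
  then show ?thesis unfolding dow_classes_eq quotient_def by simp
qed

theorem lemma16:
  fixes m :: nat
  shows "(m = 0 \<longrightarrow> card (dow_classes 0) = 1) \<and>
         (m \<ge> 1 \<longrightarrow> (\<exists>f. bij_betw f (dow_classes m) (rooted_loopless_map_classes m)))"
  using card_dow_classes_0 inj_on_word_map_class word_map_class_image unfolding bij_betw_def by blast

end
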